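(* Let $Q$ be a quantum circuit acting on $w$ qubits and let $N$ be a positive integer that is a power of two; set $l=\log_2N+3$. Let $R_2^{(N)}$ be the circuit with registers: an $l$-qubit counter register $\mathsf{C}$ whose first two qubits $\mathsf{C}^{(1)},\mathsf{C}^{(2)}$ are the first two qubits of the whole circuit and hold the two most significant bits, a single-qubit register $\mathsf{Q}$, and for each $j\in\{1,\dots,8N\}$ a $(w-1)$-qubit register $\mathsf{R}_j$ and a single-qubit register $\mathsf{X}_j$; it first applies $U^{(8N)}_{+1}$ to $\mathsf{C}$ exactly $N$ times, where $U^{(8N)}_{+1}|j\rangle=|(j+1)\bmod 8N\rangle$, and then for $j=1,\dots,8N$ in turn applies $Q$ to $(\mathsf{Q},\mathsf{R}_j)$ (with $\mathsf{Q}$ as $Q$'s first qubit), CNOT with control $\mathsf{Q}$ and target $\mathsf{X}_j$, and the controlled-$U^{(8N)}_{+1}$ with control $\mathsf{Q}$ and target $\mathsf{C}$; its output qubit is $\mathsf{C}^{(1)}$. Then \[p_{\mathrm{acc}}(R_2^{(N)},2)\ge\bigl(p_{\mathrm{acc}}(Q,1)\bigr)^{8N-1}.\]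
   Context: For a circuit $Q$ on $w$ qubits and $1\le k\le w$, $p_{\mathrm{acc}}(Q,k)=\mathrm{tr}\,\Pi_{\mathrm{acc}}Q\rho^{(w,k)}_{\mathrm{init}}Q^\dagger$, where $\rho^{(w,k)}_{\mathrm{init}}=(|0\rangle\langle0|)^{\otimes k}\otimes(I/2)^{\otimes(w-k)}$ and $\Pi_{\mathrm{acc}}=|0\rangle\langle0|\otimes I^{\otimes(w-1)}$; i.e., the first $k$ qubits start in $|0\rangle$, the remaining qubits are maximally mixed, and acceptance means the first qubit is measured as $0$ in the computational basis. For $R_2^{(N)}$, only $\mathsf{C}^{(1)}$ and $\mathsf{C}^{(2)}$ are clean; all other qubits start maximally mixed. The counter register $\mathsf{C}$ encodes an integer in $\{0,\dots,8N-1\}$ in binary. *)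

theory Defs
  imports "Jordan_Normal_Form.Schur_Decomposition" "HOL-Library.Discrete_Functions"
begin

text \<open>Computational basis index a < 2^n encodes the bit string b_0 b_1 ... b_(n-1),
  where qubit number t (0-based position; "first qubit" = position 0) is the
  bit of weight 2^(n-1-t), i.e. the first qubit is the most significant bit.\<close>

definition qbit :: "nat \<Rightarrow> nat \<Rightarrow> nat \<Rightarrow> nat" where
  "qbit n a t = (a div 2 ^ (n - 1 - t)) mod 2"

definition unitary_mat :: "nat \<Rightarrow> complex mat \<Rightarrow> bool" where
  "unitary_mat d U \<longleftrightarrow> U \<in> carrier_mat d d \<and> U * mat_adjoint U = 1\<^sub>m d \<and> mat_adjoint U * U = 1\<^sub>m d"

text \<open>Initial state rho_init^(w,k) = |0><0|^(tensor k) tensor (I/2)^(tensor (w-k)):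
  diagonal, with entry 1/2^(w-k) on basis states whose first k qubits are 0.\<close>
definition rho_init :: "nat \<Rightarrow> nat \<Rightarrow> complex mat" where
  "rho_init w k = mat (2^w) (2^w) (\<lambda>(a,b).
     if a = b \<and> (\<forall>t<k. qbit w a t = 0) then 1 / 2 ^ (w - k) else 0)"

definition Pi_acc :: "nat \<Rightarrow> complex mat" where
  "Pi_acc w = mat (2^w) (2^w) (\<lambda>(a,b). if a = b \<and> qbit w a 0 = 0 then 1 else 0)"

definition mat_trace :: "complex mat \<Rightarrow> complex" where
  "mat_trace A = (\<Sum>i<dim_row A. A $$ (i,i))"

definition p_acc :: "nat \<Rightarrow> complex mat \<Rightarrow> nat \<Rightarrow> real" where
  "p_acc w Q k = Re (mat_trace (Pi_acc w * Q * rho_init w k * mat_adjoint Q))"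

text \<open>Index of the sub-basis state of the qubits listed in qs (first listed qubit = most
  significant bit of the gate's local index).\<close>
definition sub_index :: "nat \<Rightarrow> nat list \<Rightarrow> nat \<Rightarrow> nat" where
  "sub_index n qs a = (\<Sum>t<length qs. qbit n a (qs ! t) * 2 ^ (length qs - 1 - t))"

definition embed :: "nat \<Rightarrow> nat list \<Rightarrow> complex mat \<Rightarrow> complex mat" where
  "embed n qs G = mat (2^n) (2^n) (\<lambda>(a,b).
     if \<forall>t<n. t \<notin> set qs \<longrightarrow> qbit n a t = qbit n b t
     then G $$ (sub_index n qs a, sub_index n qs b) else 0)"

text \<open>Circuit from a list of gates (applied in list order).\<close>
definition circuit :: "nat \<Rightarrow> complex mat list \<Rightarrow> complex mat" where
  "circuit n gs = foldl (\<lambda>M G. G * M) (1\<^sub>m (2^n)) gs"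

definition U_inc :: "nat \<Rightarrow> nat \<Rightarrow> complex mat" where
  "U_inc l M = mat (2^l) (2^l) (\<lambda>(a,b). if a = (b + 1) mod M then 1 else 0)"

text \<open>Controlled-U with the control as first qubit.\<close>
definition controlled :: "nat \<Rightarrow> complex mat \<Rightarrow> complex mat" where
  "controlled l U = mat (2^(l+1)) (2^(l+1)) (\<lambda>(a,b).
     if a < 2^l \<and> b < 2^l then (if a = b then 1 else 0)
     else if 2^l \<le> a \<and> 2^l \<le> b then U $$ (a - 2^l, b - 2^l) else 0)"

definition CNOT :: "complex mat" where
  "CNOT = controlled 1 (mat 2 2 (\<lambda>(a,b). if a \<noteq> b then 1 else 0))"

text \<open>Register layout of R_2^(N) (0-based qubit positions), with l = log2 N + 3:
  C = positions 0..l-1 (position 0 = C^(1), position 1 = C^(2), most significant first);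
  Q = position l; for j = 1..8N, R_j = positions l+1+(j-1)w .. l+(j-1)w+w-1 (w-1 qubits)
  and X_j = position l+(j-1)w+w.\<close>
definition R2_l :: "nat \<Rightarrow> nat" where "R2_l N = floor_log N + 3"
definition R2_n :: "nat \<Rightarrow> nat \<Rightarrow> nat" where "R2_n N w = R2_l N + 1 + 8 * N * w"
definition R2_R :: "nat \<Rightarrow> nat \<Rightarrow> nat \<Rightarrow> nat list" where
  "R2_R N w j = [R2_l N + 1 + (j - 1) * w ..< R2_l N + (j - 1) * w + w]"
definition R2_X :: "nat \<Rightarrow> nat \<Rightarrow> nat \<Rightarrow> nat" where
  "R2_X N w j = R2_l N + (j - 1) * w + w"

definition R2 :: "nat \<Rightarrow> nat \<Rightarrow> complex mat \<Rightarrow> complex mat" where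
  "R2 N w Q = (let l = R2_l N; n = R2_n N w; C = [0..<l]; Qr = l in
     circuit n
       (replicate N (embed n C (U_inc l (8 * N))) @
        concat (map (\<lambda>j. [embed n (Qr # R2_R N w j) Q,
                            embed n [Qr, R2_X N w j] CNOT,
                            embed n (Qr # C) (controlled l (U_inc l (8 * N)))])
                    [1..<8 * N + 1])))"

end

theory Submission
  imports Defs
begin

text \<open>Fix a basis input \<open>b\<close> of \<open>R\<^sub>2\<close> and follow the branch on which every application of \<open>Q\<close>
  leaves its first qubit in the same state \<open>t \<in> {0, 1}\<close>. The CNOTs copy these bits into the
  ancillas \<open>X\<^sub>j\<close>, so the two branches are orthogonal and their weights add. On such a branch the
  \<open>j\<close>-th application of \<open>Q\<close> acts on \<open>Q = t\<close> and the untouched register \<open>R\<^sub>j\<close>, so the weight of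
  the branch is a product of transition weights of \<open>Q\<close>. Averaging over the maximally mixed \<open>R\<^sub>j\<close>
  turns each factor into \<open>p_acc(Q, 1)\<close> (for \<open>t = 1\<close> by unitarity), except the first one, whose
  input \<open>Q\<close> is itself mixed and which contributes \<open>1/2\<close>. Along the branch the counter advances
  by \<open>N + 8N t \<equiv> N (mod 8N)\<close>; starting from a clean counter (value below \<open>2N\<close>) it ends below
  \<open>4N\<close>, so the output qubit \<open>C\<^sup>(\<^sup>1\<^sup>)\<close> reads 0. Hence
  \<open>p_acc(R\<^sub>2, 2) \<ge> 2 \<cdot> p_acc(Q, 1)\<^sup>8\<^sup>N\<^sup>-\<^sup>1 / 2\<close>.\<close>

section \<open>Qubit positions of basis indices\<close>

definition nat_of_bits :: "nat \<Rightarrow> (nat \<Rightarrow> nat) \<Rightarrow> nat" where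
  "nat_of_bits n f = (\<Sum>t<n. f t * 2 ^ (n - 1 - t))"

lemma sub_index_eq_nat_of_bits: "sub_index n qs a = nat_of_bits (length qs) (\<lambda>t. qbit n a (qs ! t))"
  by (simp add: sub_index_def nat_of_bits_def)

lemma binary_sum_less: "(\<And>i. i < n \<Longrightarrow> g i \<le> (1::nat)) \<Longrightarrow> (\<Sum>i<n. g i * 2 ^ i) < 2 ^ n"
proof (induction n)
  case 0
  then show ?case by simp
next
  case (Suc n)
  have g: "g n * 2 ^ n \<le> 1 * 2 ^ n"
    using Suc.prems by (intro mult_le_mono1) auto
  have "(\<Sum>i<Suc n. g i * 2 ^ i) = (\<Sum>i<n. g i * 2 ^ i) + g n * 2 ^ n" by simp
  also have "\<dots> < 2 ^ n + g n * 2 ^ n" using Suc by simp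
  also have "\<dots> \<le> 2 ^ Suc n" using g by simp
  finally show ?case .
qed

lemma binary_sum_digit:
  "(\<And>i. i < n \<Longrightarrow> g i \<le> (1::nat)) \<Longrightarrow> k < n \<Longrightarrow> (\<Sum>i<n. g i * 2 ^ i) div 2 ^ k mod 2 = g k"
proof (induction n)
  case 0
  then show ?case by simp
next
  case (Suc n)
  have S: "(\<Sum>i<Suc n. g i * 2 ^ i) = (\<Sum>i<n. g i * 2 ^ i) + g n * 2 ^ n" by simp
  show ?case
  proof (cases "k < n")
    case True
    have e: "g n * 2 ^ n = (g n * 2 ^ (n - k)) * 2 ^ k"
      using True by (simp add: power_add[symmetric])
    have "(\<Sum>i<Suc n. g i * 2 ^ i) div 2 ^ k = (\<Sum>i<n. g i * 2 ^ i) div 2 ^ k + g n * 2 ^ (n - k)"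
      unfolding S e by simp
    moreover have "even (g n * 2 ^ (n - k))" using True by simp
    then obtain m where "g n * 2 ^ (n - k) = 2 * m" by (rule evenE)
    ultimately show ?thesis using Suc True by simp
  next
    case False
    then have k: "k = n" using Suc.prems by simp
    have "(\<Sum>i<n. g i * 2 ^ i) < 2 ^ n"
      using Suc.prems by (intro binary_sum_less) auto
    then have "(\<Sum>i<Suc n. g i * 2 ^ i) div 2 ^ k = g n"
      unfolding S k by simp
    moreover have "g n \<le> 1" using Suc.prems(1) by simp
    ultimately show ?thesis using k by (cases "g n") auto
  qed
qed

lemma binary_sum_digits: "(\<Sum>i<n. (a div 2 ^ i mod 2) * 2 ^ i) = (a::nat) mod 2 ^ n"
proof (induction n)
  case 0
  then show ?case by simp
next
  case (Suc n)
  have "a mod (2 ^ n * 2) = 2 ^ n * (a div 2 ^ n mod 2) + a mod 2 ^ n" by (rule mod_mult2_eq)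
  then show ?case using Suc by (simp add: mult.commute)
qed

lemma nat_of_bits_eq_binary_sum: "nat_of_bits n f = (\<Sum>i<n. f (n - Suc i) * 2 ^ i)"
proof -
  have "nat_of_bits n f = (\<Sum>i<n. (\<lambda>t. f t * 2 ^ (n - 1 - t)) (n - Suc i))"
    unfolding nat_of_bits_def by (rule sum.nat_diff_reindex[symmetric])
  also have "\<dots> = (\<Sum>i<n. f (n - Suc i) * 2 ^ i)"
    by (intro sum.cong) auto
  finally show ?thesis .
qed

lemma nat_of_bits_less: "(\<And>t. t < n \<Longrightarrow> f t \<le> 1) \<Longrightarrow> nat_of_bits n f < 2 ^ n"
  unfolding nat_of_bits_eq_binary_sum by (intro binary_sum_less) auto

lemma qbit_nat_of_bits: "(\<And>t. t < n \<Longrightarrow> f t \<le> 1) \<Longrightarrow> t < n \<Longrightarrow> qbit n (nat_of_bits n f) t = f t"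
  unfolding nat_of_bits_eq_binary_sum qbit_def by (subst binary_sum_digit) auto

lemma qbit_le_1 [simp]: "qbit n a t \<le> 1" "qbit n a t \<le> Suc 0"
  by (simp_all add: qbit_def)

lemma nat_of_bits_qbit: "a < 2 ^ n \<Longrightarrow> nat_of_bits n (qbit n a) = a"
proof -
  assume a: "a < 2 ^ n"
  have "nat_of_bits n (qbit n a) = (\<Sum>i<n. (a div 2 ^ i mod 2) * 2 ^ i)"
    unfolding nat_of_bits_eq_binary_sum qbit_def by (intro sum.cong) auto
  also have "\<dots> = a" using a by (simp add: binary_sum_digits)
  finally show ?thesis .
qed

lemma nat_of_bits_cong: "(\<And>t. t < n \<Longrightarrow> f t = g t) \<Longrightarrow> nat_of_bits n f = nat_of_bits n g"
  unfolding nat_of_bits_def by (intro sum.cong) auto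

lemma qbit_eqI: "a < 2 ^ n \<Longrightarrow> b < 2 ^ n \<Longrightarrow> (\<And>t. t < n \<Longrightarrow> qbit n a t = qbit n b t) \<Longrightarrow> a = b"
  by (metis nat_of_bits_qbit nat_of_bits_cong)

fun index_of :: "nat list \<Rightarrow> nat \<Rightarrow> nat" where
  "index_of [] t = 0"
| "index_of (x # xs) t = (if x = t then 0 else Suc (index_of xs t))"

lemma index_of_nth: "distinct qs \<Longrightarrow> i < length qs \<Longrightarrow> index_of qs (qs ! i) = i"
proof (induction qs arbitrary: i)
  case Nil
  then show ?case by simp
next
  case (Cons x xs)
  then show ?case by (cases i) (auto simp: nth_mem)
qed

lemma index_of_mem: "t \<in> set qs \<Longrightarrow> index_of qs t < length qs \<and> qs ! index_of qs t = t"
  by (induction qs) auto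

definition overwrite :: "nat \<Rightarrow> nat list \<Rightarrow> nat \<Rightarrow> nat \<Rightarrow> nat" where
  "overwrite n qs a s =
     nat_of_bits n (\<lambda>t. if t \<in> set qs then qbit (length qs) s (index_of qs t) else qbit n a t)"

lemma qbit_overwrite:
  "t < n \<Longrightarrow> qbit n (overwrite n qs a s) t =
     (if t \<in> set qs then qbit (length qs) s (index_of qs t) else qbit n a t)"
  unfolding overwrite_def by (subst qbit_nat_of_bits) auto

lemma overwrite_less [simp]: "overwrite n qs a s < 2 ^ n"
  unfolding overwrite_def by (intro nat_of_bits_less) auto

lemma sub_index_less [simp]: "sub_index n qs a < 2 ^ length qs"
  unfolding sub_index_eq_nat_of_bits by (intro nat_of_bits_less) auto

lemma qbit_sub_index: "i < length qs \<Longrightarrow> qbit (length qs) (sub_index n qs a) i = qbit n a (qs ! i)"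
  unfolding sub_index_eq_nat_of_bits by (subst qbit_nat_of_bits) auto

lemma sub_index_cong: "(\<And>t. t \<in> set qs \<Longrightarrow> qbit n a t = qbit n b t) \<Longrightarrow> sub_index n qs a = sub_index n qs b"
  unfolding sub_index_def by (intro sum.cong) (auto simp: nth_mem)

lemma sub_index_overwrite:
  assumes "distinct qs" and "set qs \<subseteq> {..<n}" and "s < 2 ^ length qs"
  shows "sub_index n qs (overwrite n qs a s) = s"
proof -
  have "sub_index n qs (overwrite n qs a s) = nat_of_bits (length qs) (qbit (length qs) s)"
    unfolding sub_index_eq_nat_of_bits
  proof (rule nat_of_bits_cong)
    fix i assume i: "i < length qs"
    then have "qs ! i < n" using assms(2) nth_mem by blast
    then show "qbit n (overwrite n qs a s) (qs ! i) = qbit (length qs) s i"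
      using i assms(1) by (simp add: qbit_overwrite nth_mem index_of_nth)
  qed
  also have "\<dots> = s" using assms(3) by (rule nat_of_bits_qbit)
  finally show ?thesis .
qed

lemma overwrite_sub_index: "a < 2 ^ n \<Longrightarrow> set qs \<subseteq> {..<n} \<Longrightarrow> overwrite n qs a (sub_index n qs a) = a"
  by (rule qbit_eqI[of _ n]) (auto simp: qbit_overwrite qbit_sub_index index_of_mem)

lemma overwrite_overwrite [simp]: "overwrite n qs (overwrite n qs a s) s' = overwrite n qs a s'"
  by (rule qbit_eqI[of _ n]) (auto simp: qbit_overwrite)

lemma sum_split_qubits:
  assumes d: "distinct qs" and q: "set qs \<subseteq> {..<n}"
  shows "(\<Sum>c<2 ^ n. F c) =
    (\<Sum>z\<in>{z. z < 2 ^ n \<and> sub_index n qs z = 0}. \<Sum>s<2 ^ length qs. F (overwrite n qs z s))"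
proof -
  let ?Z = "{z. z < 2 ^ n \<and> sub_index n qs z = 0}"
  have "(\<Sum>z\<in>?Z. \<Sum>s<2 ^ length qs. F (overwrite n qs z s)) =
        (\<Sum>(z, s)\<in>?Z \<times> {..<2 ^ length qs}. F (overwrite n qs z s))"
    by (rule sum.cartesian_product)
  also have "\<dots> = (\<Sum>c<2 ^ n. F c)"
  proof (rule sum.reindex_bij_witness[where j = "\<lambda>(z, s). overwrite n qs z s"
                                       and i = "\<lambda>c. (overwrite n qs c 0, sub_index n qs c)"])
    fix zs :: "nat \<times> nat" assume "zs \<in> ?Z \<times> {..<2 ^ length qs}"
    then obtain z s where zs: "zs = (z, s)" "z < 2 ^ n" "sub_index n qs z = 0" "s < 2 ^ length qs"
      by auto
    have "overwrite n qs z 0 = z" using overwrite_sub_index[OF zs(2) q] zs(3) by simp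
    then show "(\<lambda>c. (overwrite n qs c 0, sub_index n qs c)) ((\<lambda>(z, s). overwrite n qs z s) zs) = zs"
      using zs d q by (simp add: sub_index_overwrite)
    show "(\<lambda>(z, s). overwrite n qs z s) zs \<in> {..<2 ^ n}" using zs by simp
    show "F ((\<lambda>(z, s). overwrite n qs z s) zs) = (case zs of (z, s) \<Rightarrow> F (overwrite n qs z s))"
      using zs by simp
  next
    fix c assume "c \<in> {..<(2::nat) ^ n}"
    then show "(\<lambda>(z, s). overwrite n qs z s) ((\<lambda>c. (overwrite n qs c 0, sub_index n qs c)) c) = c"
      using q by (simp add: overwrite_sub_index)
    show "(\<lambda>c. (overwrite n qs c 0, sub_index n qs c)) c \<in> ?Z \<times> {..<2 ^ length qs}"
      using d q by (simp add: sub_index_overwrite)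
  qed
  finally show ?thesis by simp
qed

lemma sum_Collect_less_if: "(\<Sum>b\<in>{b. b < (k::nat) \<and> P b}. h b) = (\<Sum>b<k. if P b then h b else 0)"
proof -
  have "{b. b < k \<and> P b} = {..<k} \<inter> {b. P b}" by auto
  then show ?thesis by (simp add: sum.inter_restrict)
qed

lemma sum_sub_index_factor:
  fixes F G :: "nat \<Rightarrow> real"
  assumes d: "distinct qs" and q: "set qs \<subseteq> {..<n}"
    and inv: "\<And>b s. b < 2 ^ n \<Longrightarrow> s < 2 ^ length qs \<Longrightarrow>
                P (overwrite n qs b s) = P b \<and> G (overwrite n qs b s) = G b"
  shows "(\<Sum>b\<in>{b. b < 2 ^ n \<and> P b}. F (sub_index n qs b) * G b) =
         (\<Sum>s<2 ^ length qs. F s) / 2 ^ length qs * (\<Sum>b\<in>{b. b < 2 ^ n \<and> P b}. G b)"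
proof -
  let ?Z = "{z. z < 2 ^ n \<and> sub_index n qs z = 0}"
  let ?g = "\<lambda>z. if P z then G z else 0"
  have "(\<Sum>b\<in>{b. b < 2 ^ n \<and> P b}. F (sub_index n qs b) * G b) =
        (\<Sum>b<2 ^ n. if P b then F (sub_index n qs b) * G b else 0)"
    by (rule sum_Collect_less_if)
  also have "\<dots> = (\<Sum>z\<in>?Z. \<Sum>s<2 ^ length qs.
      (\<lambda>b. if P b then F (sub_index n qs b) * G b else 0) (overwrite n qs z s))"
    by (rule sum_split_qubits[OF d q])
  also have "\<dots> = (\<Sum>z\<in>?Z. ?g z * (\<Sum>s<2 ^ length qs. F s))"
    by (intro sum.cong refl)
       (auto simp: inv sub_index_overwrite[OF d q] sum_distrib_left mult.commute intro!: sum.cong)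
  also have "\<dots> = (\<Sum>z\<in>?Z. ?g z) * (\<Sum>s<2 ^ length qs. F s)"
    by (simp add: sum_distrib_right)
  finally have 1: "(\<Sum>b\<in>{b. b < 2 ^ n \<and> P b}. F (sub_index n qs b) * G b) =
                   (\<Sum>z\<in>?Z. ?g z) * (\<Sum>s<2 ^ length qs. F s)" .
  have "(\<Sum>b\<in>{b. b < 2 ^ n \<and> P b}. G b) = (\<Sum>b<2 ^ n. ?g b)"
    by (rule sum_Collect_less_if)
  also have "\<dots> = (\<Sum>z\<in>?Z. \<Sum>s<2 ^ length qs. ?g (overwrite n qs z s))"
    by (rule sum_split_qubits[OF d q])
  also have "\<dots> = (\<Sum>z\<in>?Z. ?g z * 2 ^ length qs)"
    by (intro sum.cong refl) (auto simp: inv)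
  finally have 2: "(\<Sum>b\<in>{b. b < 2 ^ n \<and> P b}. G b) = (\<Sum>z\<in>?Z. ?g z) * 2 ^ length qs"
    by (simp add: sum_distrib_right)
  show ?thesis unfolding 1 2 by simp
qed

lemma sub_index_Cons: "sub_index n (p # ps) a = qbit n a p * 2 ^ length ps + sub_index n ps a"
  unfolding sub_index_def length_Cons sum.lessThan_Suc_shift by simp

lemma sub_index_pair: "sub_index n [p1, p2] a = 2 * qbit n a p1 + qbit n a p2"
  by (simp add: sub_index_Cons sub_index_def)

lemma qbit_Suc_high: "q \<le> 1 \<Longrightarrow> c < 2 ^ m \<Longrightarrow> qbit (Suc m) (q * 2 ^ m + c) 0 = q"
  unfolding qbit_def by auto

lemma qbit_Suc_low:
  assumes q: "q \<le> 1" and c: "c < 2 ^ m" and i: "i < m"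
  shows "qbit (Suc m) (q * 2 ^ m + c) (Suc i) = qbit m c i"
proof -
  have "Suc i + (m - 1 - i) = m" using i by simp
  then have e: "q * 2 ^ m = (q * 2 ^ Suc i) * 2 ^ (m - 1 - i)" by (metis mult.assoc power_add)
  have "(q * 2 ^ m + c) div 2 ^ (m - 1 - i) = c div 2 ^ (m - 1 - i) + 2 * (q * 2 ^ i)"
    unfolding e by simp
  then show ?thesis unfolding qbit_def by simp
qed

lemma sum_lessThan_double:
  "(\<Sum>a<2 * (h::nat). f a) = (\<Sum>a<h. f a) + (\<Sum>r<h. f (h + r) :: 'a::comm_monoid_add)"
proof -
  have "sum f {0..<h} + sum f {h..<h + h} = sum f {0..<h + h}"
    by (rule sum.atLeastLessThan_concat) auto
  moreover have "(\<Sum>a\<in>{h..<h + h}. f a) = (\<Sum>r<h. f (h + r))"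
    by (simp add: sum.shift_bounds_nat_ivl[symmetric] atLeast0LessThan[symmetric] add.commute)
  ultimately show ?thesis by (simp add: mult_2 atLeast0LessThan)
qed

lemma sum_top_qubit:
  assumes w: "1 \<le> w" and t: "t \<le> (1::nat)"
  shows "(\<Sum>s<2 ^ w. if qbit w s 0 = t then f s else 0) = (\<Sum>r<2 ^ (w - 1). f (t * 2 ^ (w - 1) + r) :: real)"
proof -
  let ?h = "2 ^ (w - 1) :: nat"
  have hw: "2 ^ w = 2 * ?h" using w by (simp add: power_eq_if)
  have low: "qbit w s 0 = 0" if "s < ?h" for s using that w by (simp add: qbit_def)
  have high: "qbit w (?h + r) 0 = 1" if "r < ?h" for r
  proof -
    have "(?h + r) div ?h = 1" using that by simp
    then show ?thesis using w by (simp add: qbit_def)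
  qed
  have "(\<Sum>s<2 ^ w. if qbit w s 0 = t then f s else 0) =
     (\<Sum>s<?h. if qbit w s 0 = t then f s else 0) + (\<Sum>r<?h. if qbit w (?h + r) 0 = t then f (?h + r) else 0)"
    unfolding hw by (rule sum_lessThan_double)
  also have "\<dots> = (\<Sum>r<?h. f (t * ?h + r))"
  proof (cases "t = 0")
    case True
    then show ?thesis using low high by simp
  next
    case False
    then have "t = 1" using t by simp
    then show ?thesis using low high by simp
  qed
  finally show ?thesis .
qed

lemma sum_eq_single:
  assumes "finite A" and "i \<in> A" and "\<And>e. e \<in> A \<Longrightarrow> e \<noteq> i \<Longrightarrow> f e = 0"
  shows "sum f A = (f i :: 'a::comm_monoid_add)"
proof -
  have "sum f A = f i + sum f (A - {i})" using assms(1,2) by (rule sum.remove)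
  also have "sum f (A - {i}) = 0" using assms(3) by (intro sum.neutral) auto
  finally show ?thesis by simp
qed

lemma mod_add_sub_eq_iff:
  assumes K: "0 < (K::nat)" "c < K" "q \<le> K"
  shows "(c + K - q) mod K = y mod K \<longleftrightarrow> c = (y + q) mod K"
proof
  assume "(c + K - q) mod K = y mod K"
  then have "(c + K - q + q) mod K = (y + q) mod K" by (metis mod_add_left_eq)
  moreover have "c + K - q + q = c + K" using K by simp
  ultimately show "c = (y + q) mod K" using K by simp
next
  assume "c = (y + q) mod K"
  then have "(c + (K - q)) mod K = (y + q + (K - q)) mod K" by (metis mod_add_left_eq)
  moreover have "y + q + (K - q) = y + K" using K by simp
  moreover have "c + K - q = c + (K - q)" using K by simp
  ultimately have "(c + K - q) mod K = (y + K) mod K" by metis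
  then show "(c + K - q) mod K = y mod K" by simp
qed

lemma mult_add_le_mult: "i < (j::nat) \<Longrightarrow> i * w + w \<le> j * w"
proof -
  assume "i < j"
  then have "Suc i * w \<le> j * w" by (intro mult_le_mono1) simp
  then show ?thesis by simp
qed

section \<open>Matrix entries of embedded gates and acceptance probabilities\<close>

lemma mat_adjoint_index [simp]:
  "i < dim_col A \<Longrightarrow> j < dim_row A \<Longrightarrow> mat_adjoint A $$ (i, j) = conjugate (A $$ (j, i))"
  by (simp add: mat_adjoint_def mat_of_rows_index)

lemma dim_mat_adjoint [simp]:
  "dim_row (mat_adjoint A) = dim_col A" "dim_col (mat_adjoint A) = dim_row A"
  by (simp_all add: mat_adjoint_def)

lemma mat_adjoint_carrier_mat: "U \<in> carrier_mat d d \<Longrightarrow> mat_adjoint U \<in> carrier_mat d d"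
  by (metis dim_mat_adjoint carrier_matD carrier_matI)

lemma index_mult_mat_sum:
  "A \<in> carrier_mat m d \<Longrightarrow> B \<in> carrier_mat d k \<Longrightarrow> i < m \<Longrightarrow> j < k \<Longrightarrow>
   (A * B) $$ (i, j) = (\<Sum>c<d. A $$ (i, c) * B $$ (c, j))"
  by (auto simp: scalar_prod_def atLeast0LessThan intro!: sum.cong)

lemma mult_conjugate_cmod_sq: "(z::complex) * conjugate z = of_real ((cmod z)\<^sup>2)"
  using complex_norm_square[of z] by simp

lemma Pi_acc_carrier_mat [simp]: "Pi_acc w \<in> carrier_mat (2 ^ w) (2 ^ w)"
  by (simp add: Pi_acc_def)

lemma rho_init_carrier_mat [simp]: "rho_init w k \<in> carrier_mat (2 ^ w) (2 ^ w)"
  by (simp add: rho_init_def)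

lemma index_embed:
  "a < 2 ^ n \<Longrightarrow> c < 2 ^ n \<Longrightarrow> embed n qs G $$ (a, c) =
    (if \<forall>t<n. t \<notin> set qs \<longrightarrow> qbit n a t = qbit n c t
     then G $$ (sub_index n qs a, sub_index n qs c) else 0)"
  by (simp add: embed_def)

lemma embed_carrier_mat [simp]: "embed n qs G \<in> carrier_mat (2 ^ n) (2 ^ n)"
  by (simp add: embed_def)

lemma index_embed_mult:
  assumes d: "distinct qs" and q: "set qs \<subseteq> {..<n}" and M: "M \<in> carrier_mat (2 ^ n) k"
    and a: "a < 2 ^ n" and b: "b < k"
  shows "(embed n qs G * M) $$ (a, b) =
    (\<Sum>s<2 ^ length qs. G $$ (sub_index n qs a, s) * M $$ (overwrite n qs a s, b))"
proof -
  let ?F = "\<lambda>c. embed n qs G $$ (a, c) * M $$ (c, b)"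
  let ?S = "overwrite n qs a ` {..<2 ^ length qs}"
  have "(embed n qs G * M) $$ (a, b) = (\<Sum>c<2 ^ n. ?F c)"
    using M a b by (intro index_mult_mat_sum) auto
  also have "\<dots> = (\<Sum>c\<in>?S. ?F c)"
  proof (rule sum.mono_neutral_right)
    show "finite {..<(2::nat) ^ n}" by simp
    show "?S \<subseteq> {..<2 ^ n}" by auto
    show "\<forall>c\<in>{..<2 ^ n} - ?S. ?F c = 0"
    proof
      fix c assume c: "c \<in> {..<2 ^ n} - ?S"
      show "?F c = 0"
      proof (cases "\<forall>t<n. t \<notin> set qs \<longrightarrow> qbit n a t = qbit n c t")
        case True
        have "c < 2 ^ n" using c by simp
        then have "overwrite n qs a (sub_index n qs c) = c"
          by (rule qbit_eqI[OF overwrite_less]) (use True in \<open>auto simp: qbit_overwrite qbit_sub_index index_of_mem\<close>)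
        then have "c \<in> ?S" by (metis image_eqI lessThan_iff sub_index_less)
        then show ?thesis using c by simp
      next
        case False
        then show ?thesis using c a by (simp add: index_embed del: not_all)
      qed
    qed
  qed
  also have "\<dots> = (\<Sum>s<2 ^ length qs. ?F (overwrite n qs a s))"
  proof -
    have "inj_on (overwrite n qs a) {..<2 ^ length qs}"
      by (rule inj_onI) (metis sub_index_overwrite d q lessThan_iff)
    then show ?thesis by (subst sum.reindex) (simp_all add: o_def)
  qed
  also have "\<dots> = (\<Sum>s<2 ^ length qs. G $$ (sub_index n qs a, s) * M $$ (overwrite n qs a s, b))"
  proof (intro sum.cong refl)
    fix s assume "s \<in> {..<(2::nat) ^ length qs}"
    then have "embed n qs G $$ (a, overwrite n qs a s) = G $$ (sub_index n qs a, s)"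
      using a d q by (simp add: index_embed qbit_overwrite sub_index_overwrite)
    then show "?F (overwrite n qs a s) = G $$ (sub_index n qs a, s) * M $$ (overwrite n qs a s, b)"
      by simp
  qed
  finally show ?thesis .
qed

lemma index_embed_mult_permutation:
  assumes d: "distinct qs" and q: "set qs \<subseteq> {..<n}" and M: "M \<in> carrier_mat (2 ^ n) k"
    and a: "a < 2 ^ n" and b: "b < k"
    and G: "\<And>s. s < 2 ^ length qs \<Longrightarrow> G $$ (sub_index n qs a, s) = (if s = v then 1 else 0)"
    and v: "v < 2 ^ length qs"
  shows "(embed n qs G * M) $$ (a, b) = M $$ (overwrite n qs a v, b)"
proof -
  have "(embed n qs G * M) $$ (a, b) =
        (\<Sum>s<2 ^ length qs. G $$ (sub_index n qs a, s) * M $$ (overwrite n qs a s, b))"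
    by (rule index_embed_mult[OF d q M a b])
  also have "\<dots> = G $$ (sub_index n qs a, v) * M $$ (overwrite n qs a v, b)"
    by (rule sum_eq_single) (use v G in auto)
  finally show ?thesis using G v by simp
qed

lemma index_Pi_acc_mult:
  assumes U: "U \<in> carrier_mat (2 ^ w) (2 ^ w)" and i: "i < 2 ^ w" and c: "c < 2 ^ w"
  shows "(Pi_acc w * U) $$ (i, c) = (if qbit w i 0 = 0 then U $$ (i, c) else 0)"
proof -
  have "(Pi_acc w * U) $$ (i, c) = (\<Sum>e<2 ^ w. Pi_acc w $$ (i, e) * U $$ (e, c))"
    using U i c by (intro index_mult_mat_sum) auto
  also have "\<dots> = Pi_acc w $$ (i, i) * U $$ (i, c)"
    by (rule sum_eq_single) (use i in \<open>auto simp: Pi_acc_def\<close>)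
  finally show ?thesis using i by (simp add: Pi_acc_def)
qed

lemma index_Pi_acc_mult_rho_init:
  assumes U: "U \<in> carrier_mat (2 ^ w) (2 ^ w)" and i: "i < 2 ^ w" and c: "c < 2 ^ w"
  shows "(Pi_acc w * U * rho_init w k) $$ (i, c) =
    (if qbit w i 0 = 0 then U $$ (i, c) else 0) *
    (if \<forall>t<k. qbit w c t = 0 then 1 / 2 ^ (w - k) else 0)"
proof -
  have PU: "Pi_acc w * U \<in> carrier_mat (2 ^ w) (2 ^ w)"
    using U by (meson mult_carrier_mat Pi_acc_carrier_mat)
  have "(Pi_acc w * U * rho_init w k) $$ (i, c) =
        (\<Sum>e<2 ^ w. (Pi_acc w * U) $$ (i, e) * rho_init w k $$ (e, c))"
    using PU i c by (intro index_mult_mat_sum) auto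
  also have "\<dots> = (Pi_acc w * U) $$ (i, c) * rho_init w k $$ (c, c)"
    by (rule sum_eq_single) (use c in \<open>auto simp: rho_init_def\<close>)
  finally show ?thesis using i c U by (simp add: rho_init_def index_Pi_acc_mult)
qed

lemma p_acc_eq_sum:
  assumes U: "U \<in> carrier_mat (2 ^ w) (2 ^ w)"
  shows "p_acc w U k = (\<Sum>a<2 ^ w. \<Sum>b<2 ^ w.
     (if qbit w a 0 = 0 \<and> (\<forall>t<k. qbit w b t = 0) then 1 / 2 ^ (w - k) else 0) * (cmod (U $$ (a, b)))\<^sup>2)"
proof -
  let ?P = "Pi_acc w * U * rho_init w k"
  have P: "?P \<in> carrier_mat (2 ^ w) (2 ^ w)"
    using U by (meson mult_carrier_mat Pi_acc_carrier_mat rho_init_carrier_mat)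
  have UA: "mat_adjoint U \<in> carrier_mat (2 ^ w) (2 ^ w)"
    using U by (rule mat_adjoint_carrier_mat)
  have diag: "(?P * mat_adjoint U) $$ (i, i) = (\<Sum>c<2 ^ w. of_real
      ((if qbit w i 0 = 0 \<and> (\<forall>t<k. qbit w c t = 0) then 1 / 2 ^ (w - k) else 0) * (cmod (U $$ (i, c)))\<^sup>2))"
    if i: "i < 2 ^ w" for i
  proof -
    have "(?P * mat_adjoint U) $$ (i, i) = (\<Sum>c<2 ^ w. ?P $$ (i, c) * mat_adjoint U $$ (c, i))"
      by (rule index_mult_mat_sum[OF P UA i i])
    also have "\<dots> = (\<Sum>c<2 ^ w. of_real
      ((if qbit w i 0 = 0 \<and> (\<forall>t<k. qbit w c t = 0) then 1 / 2 ^ (w - k) else 0) * (cmod (U $$ (i, c)))\<^sup>2))"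
    proof (intro sum.cong refl)
      fix c assume c: "c \<in> {..<(2::nat) ^ w}"
      have "mat_adjoint U $$ (c, i) = conjugate (U $$ (i, c))"
        using U c i by (intro mat_adjoint_index) auto
      then show "?P $$ (i, c) * mat_adjoint U $$ (c, i) = of_real
          ((if qbit w i 0 = 0 \<and> (\<forall>t<k. qbit w c t = 0) then 1 / 2 ^ (w - k) else 0) * (cmod (U $$ (i, c)))\<^sup>2)"
        using mult_conjugate_cmod_sq[of "U $$ (i, c)"] index_Pi_acc_mult_rho_init[OF U i] c
        by (auto simp: mult.commute mult.left_commute)
    qed
    finally show ?thesis .
  qed
  have "dim_row (?P * mat_adjoint U) = 2 ^ w" by (simp add: Pi_acc_def)
  then show ?thesis
    unfolding p_acc_def mat_trace_def by (simp add: diag Re_sum)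
qed

lemma unitary_col_norm:
  assumes U: "unitary_mat d Q" and b: "b < d"
  shows "(\<Sum>a<d. (cmod (Q $$ (a, b)))\<^sup>2) = 1"
proof -
  have Q: "Q \<in> carrier_mat d d" and e: "mat_adjoint Q * Q = 1\<^sub>m d"
    using U by (auto simp: unitary_mat_def)
  have QA: "mat_adjoint Q \<in> carrier_mat d d" using Q by (rule mat_adjoint_carrier_mat)
  have "(1::complex) = (mat_adjoint Q * Q) $$ (b, b)" using b e by simp
  also have "\<dots> = (\<Sum>a<d. mat_adjoint Q $$ (b, a) * Q $$ (a, b))"
    by (rule index_mult_mat_sum[OF QA Q b b])
  also have "\<dots> = of_real (\<Sum>a<d. (cmod (Q $$ (a, b)))\<^sup>2)"
    unfolding of_real_sum using Q b
    by (intro sum.cong refl) (simp add: complex_norm_square mult.commute del: of_real_power)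
  finally show ?thesis by (metis of_real_eq_1_iff)
qed

lemma unitary_row_norm:
  assumes U: "unitary_mat d Q" and a: "a < d"
  shows "(\<Sum>b<d. (cmod (Q $$ (a, b)))\<^sup>2) = 1"
proof -
  have Q: "Q \<in> carrier_mat d d" and e: "Q * mat_adjoint Q = 1\<^sub>m d"
    using U by (auto simp: unitary_mat_def)
  have QA: "mat_adjoint Q \<in> carrier_mat d d" using Q by (rule mat_adjoint_carrier_mat)
  have "(1::complex) = (Q * mat_adjoint Q) $$ (a, a)" using a e by simp
  also have "\<dots> = (\<Sum>b<d. Q $$ (a, b) * mat_adjoint Q $$ (b, a))"
    by (rule index_mult_mat_sum[OF Q QA a a])
  also have "\<dots> = of_real (\<Sum>b<d. (cmod (Q $$ (a, b)))\<^sup>2)"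
    unfolding of_real_sum using Q a
    by (intro sum.cong refl) (simp add: complex_norm_square del: of_real_power)
  finally show ?thesis by (metis of_real_eq_1_iff)
qed

lemma index_CNOT:
  "x < 4 \<Longrightarrow> s < 4 \<Longrightarrow> CNOT $$ (x, s) = (if s = (if x < 2 then x else 5 - x) then 1 else 0)"
proof -
  assume "x < 4" "s < 4"
  then have "x \<in> {0, 1, 2, 3}" "s \<in> {0, 1, 2, 3}" by auto
  then show ?thesis unfolding CNOT_def controlled_def by (auto simp: numeral_eq_Suc)
qed

lemma index_U_inc_full:
  "x < 2 ^ l \<Longrightarrow> s < 2 ^ l \<Longrightarrow> U_inc l (2 ^ l) $$ (x, s) = (if s = (x + 2 ^ l - 1) mod 2 ^ l then 1 else 0)"
  unfolding U_inc_def using mod_add_sub_eq_iff[of "2 ^ l" x 1 s] by auto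

lemma index_controlled_U_inc:
  assumes x: "x < 2 * 2 ^ l" and s: "s < 2 * 2 ^ l"
  shows "controlled l (U_inc l (2 ^ l)) $$ (x, s) =
     (if s = (if x < 2 ^ l then x else 2 ^ l + (x - 2 ^ l + 2 ^ l - 1) mod 2 ^ l) then 1 else 0)"
proof (cases "x < 2 ^ l \<or> s < 2 ^ l")
  case True
  then show ?thesis using x s unfolding controlled_def by auto
next
  case False
  then have "controlled l (U_inc l (2 ^ l)) $$ (x, s) = U_inc l (2 ^ l) $$ (x - 2 ^ l, s - 2 ^ l)"
    using x s unfolding controlled_def by auto
  also have "\<dots> = (if s - 2 ^ l = (x - 2 ^ l + 2 ^ l - 1) mod 2 ^ l then 1 else 0)"
    using False x s by (intro index_U_inc_full) auto
  finally show ?thesis using False by auto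
qed

section \<open>Transition weights of a single circuit\<close>

text \<open>\<open>trans_weight w Q q t r\<close> is the probability that \<open>Q\<close>, applied to the basis state with first
  qubit \<open>q\<close> and remaining qubits \<open>r\<close>, yields first qubit \<open>t\<close>.\<close>

definition trans_weight :: "nat \<Rightarrow> complex mat \<Rightarrow> nat \<Rightarrow> nat \<Rightarrow> nat \<Rightarrow> real" where
  "trans_weight w Q q t r =
     (\<Sum>r'<2 ^ (w - 1). (cmod (Q $$ (t * 2 ^ (w - 1) + r', q * 2 ^ (w - 1) + r)))\<^sup>2)"

lemma power_eq_double_pred: "1 \<le> w \<Longrightarrow> (2::nat) ^ w = 2 * 2 ^ (w - 1)"
  by (simp add: power_eq_if)

lemma p_acc_1_eq_trans_weight:
  assumes w: "1 \<le> w" and Q: "Q \<in> carrier_mat (2 ^ w) (2 ^ w)"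
  shows "p_acc w Q 1 = (\<Sum>r<2 ^ (w - 1). trans_weight w Q 0 0 r) / 2 ^ (w - 1)"
proof -
  let ?h = "2 ^ (w - 1) :: nat"
  have "p_acc w Q 1 = (\<Sum>a<2 ^ w. \<Sum>b<2 ^ w.
      (if qbit w a 0 = 0 \<and> qbit w b 0 = 0 then 1 / 2 ^ (w - 1) else 0) * (cmod (Q $$ (a, b)))\<^sup>2)"
    unfolding p_acc_eq_sum[OF Q] by simp
  also have "\<dots> = (\<Sum>a<2 ^ w. if qbit w a 0 = 0 then
      (\<Sum>b<2 ^ w. if qbit w b 0 = 0 then (cmod (Q $$ (a, b)))\<^sup>2 / 2 ^ (w - 1) else 0) else 0)"
    by (intro sum.cong refl) (auto intro!: sum.cong)
  also have "\<dots> = (\<Sum>r'<?h. \<Sum>b<2 ^ w. if qbit w b 0 = 0 then (cmod (Q $$ (r', b)))\<^sup>2 / 2 ^ (w - 1) else 0)"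
    using sum_top_qubit[OF w, of 0] by simp
  also have "\<dots> = (\<Sum>r'<?h. \<Sum>r<?h. (cmod (Q $$ (r', r)))\<^sup>2 / 2 ^ (w - 1))"
    using sum_top_qubit[OF w, of 0] by simp
  also have "\<dots> = (\<Sum>r<?h. \<Sum>r'<?h. (cmod (Q $$ (r', r)))\<^sup>2) / 2 ^ (w - 1)"
    by (subst sum.swap) (simp add: sum_divide_distrib)
  also have "\<dots> = (\<Sum>r<?h. trans_weight w Q 0 0 r) / 2 ^ (w - 1)"
    by (simp add: trans_weight_def)
  finally show ?thesis .
qed

text \<open>Writing \<open>Q\<close> in \<open>2 \<times> 2\<close> blocks, unitarity gives
  \<open>\<parallel>Q\<^sub>0\<^sub>0\<parallel>\<^sup>2 + \<parallel>Q\<^sub>1\<^sub>0\<parallel>\<^sup>2 = 2\<^sup>w\<^sup>-\<^sup>1 = \<parallel>Q\<^sub>1\<^sub>0\<parallel>\<^sup>2 + \<parallel>Q\<^sub>1\<^sub>1\<parallel>\<^sup>2\<close> (columns of the first block column,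
  rows of the second block row).\<close>

lemma sum_trans_weight_1_1:
  assumes w: "1 \<le> w" and U: "unitary_mat (2 ^ w) Q"
  shows "(\<Sum>r<2 ^ (w - 1). trans_weight w Q 1 1 r) = (\<Sum>r<2 ^ (w - 1). trans_weight w Q 0 0 r)"
proof -
  let ?h = "2 ^ (w - 1) :: nat"
  let ?f = "\<lambda>a b. (cmod (Q $$ (a, b)))\<^sup>2"
  note hw = power_eq_double_pred[OF w]
  have col: "(\<Sum>r'<?h. ?f r' r) + (\<Sum>r'<?h. ?f (?h + r') r) = 1" if "r < ?h" for r
  proof -
    have "(\<Sum>a<2 ^ w. ?f a r) = 1" using that hw by (intro unitary_col_norm[OF U]) simp
    then show ?thesis unfolding hw sum_lessThan_double .
  qed
  have row: "(\<Sum>r<?h. ?f (?h + r') r) + (\<Sum>r<?h. ?f (?h + r') (?h + r)) = 1" if "r' < ?h" for r'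
  proof -
    have "(\<Sum>b<2 ^ w. ?f (?h + r') b) = 1" using that hw by (intro unitary_row_norm[OF U]) simp
    then show ?thesis unfolding hw sum_lessThan_double .
  qed
  have s1: "(\<Sum>r<?h. \<Sum>r'<?h. ?f r' r) + (\<Sum>r<?h. \<Sum>r'<?h. ?f (?h + r') r) = ?h"
  proof -
    have "(\<Sum>r<?h. (\<Sum>r'<?h. ?f r' r) + (\<Sum>r'<?h. ?f (?h + r') r)) = (\<Sum>r<?h. (1::real))"
      by (intro sum.cong refl) (use col in auto)
    then show ?thesis by (simp only: sum.distrib) simp
  qed
  have s2: "(\<Sum>r'<?h. \<Sum>r<?h. ?f (?h + r') r) + (\<Sum>r'<?h. \<Sum>r<?h. ?f (?h + r') (?h + r)) = ?h"
  proof -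
    have "(\<Sum>r'<?h. (\<Sum>r<?h. ?f (?h + r') r) + (\<Sum>r<?h. ?f (?h + r') (?h + r))) = (\<Sum>r'<?h. (1::real))"
      by (intro sum.cong refl) (use row in auto)
    then show ?thesis by (simp only: sum.distrib) simp
  qed
  have "(\<Sum>r<?h. \<Sum>r'<?h. ?f (?h + r') r) = (\<Sum>r'<?h. \<Sum>r<?h. ?f (?h + r') r)"
    by (rule sum.swap)
  moreover have "(\<Sum>r<?h. trans_weight w Q 1 1 r) = (\<Sum>r'<?h. \<Sum>r<?h. ?f (?h + r') (?h + r))"
    unfolding trans_weight_def by (simp, rule sum.swap)
  moreover have "(\<Sum>r<?h. trans_weight w Q 0 0 r) = (\<Sum>r<?h. \<Sum>r'<?h. ?f r' r)"
    unfolding trans_weight_def by simp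
  ultimately show ?thesis using s1 s2 by linarith
qed

lemma sum_trans_weight_diag:
  assumes w: "1 \<le> w" and U: "unitary_mat (2 ^ w) Q" and t: "t \<le> 1"
  shows "(\<Sum>r<2 ^ (w - 1). trans_weight w Q t t r) = 2 ^ (w - 1) * p_acc w Q 1"
proof -
  have "(\<Sum>r<2 ^ (w - 1). trans_weight w Q t t r) = (\<Sum>r<2 ^ (w - 1). trans_weight w Q 0 0 r)"
  proof -
    have "t = 0 \<or> t = 1" using t by auto
    then show ?thesis using sum_trans_weight_1_1[OF w U] by auto
  qed
  moreover have "Q \<in> carrier_mat (2 ^ w) (2 ^ w)" using U by (simp add: unitary_mat_def)
  ultimately show ?thesis using p_acc_1_eq_trans_weight[OF w] by simp
qed

lemma sum_trans_weight_inputs: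
  assumes w: "1 \<le> w" and U: "unitary_mat (2 ^ w) Q" and t: "t \<le> 1"
  shows "(\<Sum>x<2 ^ w. trans_weight w Q (x div 2 ^ (w - 1)) t (x mod 2 ^ (w - 1))) = 2 ^ (w - 1)"
proof -
  let ?h = "2 ^ (w - 1) :: nat"
  have "(\<Sum>x<2 ^ w. trans_weight w Q (x div ?h) t (x mod ?h)) =
        (\<Sum>x<2 ^ w. \<Sum>r'<?h. (cmod (Q $$ (t * ?h + r', x)))\<^sup>2)"
    unfolding trans_weight_def by (simp add: div_mult_mod_eq)
  also have "\<dots> = (\<Sum>r'<?h. \<Sum>x<2 ^ w. (cmod (Q $$ (t * ?h + r', x)))\<^sup>2)"
    by (rule sum.swap)
  also have "\<dots> = (\<Sum>r'<?h. 1)"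
  proof (intro sum.cong refl unitary_row_norm[OF U])
    fix r' assume "r' \<in> {..<?h}"
    then have "r' < ?h" by simp
    moreover have "t * ?h \<le> 1 * ?h" using t by (rule mult_le_mono1)
    ultimately show "t * ?h + r' < 2 ^ w" unfolding power_eq_double_pred[OF w] by linarith
  qed
  finally show ?thesis by simp
qed

section \<open>The circuit \<open>R\<^sub>2\<^sup>(\<^sup>N\<^sup>)\<close>\<close>

lemma bit_pair_CNOT:
  assumes "q \<le> 1" and "x \<le> (1::nat)"
  shows "qbit (Suc (Suc 0)) (if 2 * q + x < 2 then 2 * q + x else 5 - (2 * q + x)) 0 = q"
    and "qbit (Suc (Suc 0)) (if 2 * q + x < 2 then 2 * q + x else 5 - (2 * q + x)) 1 = (x + q) mod 2"
  using assms by (auto simp: qbit_def le_Suc_eq)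

lemma bit_add_mod2_eq_iff:
  "(x::nat) \<le> 1 \<Longrightarrow> y \<le> 1 \<Longrightarrow> q \<le> 1 \<Longrightarrow> (x + q) mod 2 = y \<longleftrightarrow> q = (if x = y then 0 else 1)"
  by (auto simp: le_Suc_eq)

lemma bit_add_mod2_cancel:
  "(x::nat) \<le> 1 \<Longrightarrow> y \<le> 1 \<Longrightarrow> q \<le> 1 \<Longrightarrow> (x + q) mod 2 = (y + q) mod 2 \<Longrightarrow> x = y"
  by (auto simp: le_Suc_eq)

lemma bit_add_mod2_twice: "(x::nat) \<le> 1 \<Longrightarrow> q \<le> 1 \<Longrightarrow> ((x + q) mod 2 + q) mod 2 = x"
  by (auto simp: le_Suc_eq)

lemma bit_add_mod2_self: "(x::nat) \<le> 1 \<Longrightarrow> q \<le> 1 \<Longrightarrow> (if (x + q) mod 2 = x then 0 else 1) = q"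
  by (auto simp: le_Suc_eq)

locale R2_circuit =
  fixes N w m :: nat and Q :: "complex mat"
  assumes w_pos: "1 \<le> w" and unitary_Q: "unitary_mat (2 ^ w) Q" and N_eq: "N = 2 ^ m"
begin

definition l :: nat where "l = m + 3"
definition K :: nat where "K = 8 * N"
definition n :: nat where "n = l + 1 + K * w"

definition C :: "nat list" where "C = [0..<l]"
definition R :: "nat \<Rightarrow> nat list" where "R j = [l + 1 + (j - 1) * w ..< l + (j - 1) * w + w]"
definition X :: "nat \<Rightarrow> nat" where "X j = l + (j - 1) * w + w"
definition QR :: "nat \<Rightarrow> nat list" where "QR j = l # R j"

lemma K_eq_pow: "K = 2 ^ l"
  unfolding K_def l_def using N_eq by (simp add: power_add)

lemma K_pos: "0 < K"
  unfolding K_def using N_eq by simp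

lemma l_ge_3: "3 \<le> l"
  by (simp add: l_def)

lemma l_less_n: "l < n"
  by (simp add: n_def)

lemma length_C [simp]: "length C = l"
  by (simp add: C_def)

lemma set_C: "set C = {..<l}"
  by (auto simp: C_def)

lemma distinct_C: "distinct C"
  by (simp add: C_def)

lemma set_C_subset: "set C \<subseteq> {..<n}"
  by (auto simp: set_C n_def)

lemma index_of_C: "t < l \<Longrightarrow> index_of C t = t"
  using index_of_nth[OF distinct_C, of t] by (simp add: C_def)

lemma length_R [simp]: "length (R j) = w - 1"
  using w_pos by (simp add: R_def)

lemma length_QR [simp]: "length (QR j) = w"
  using w_pos by (simp add: QR_def)

lemma set_R_Suc: "set (R (Suc i)) = {t. l + 1 + i * w \<le> t \<and> t < l + i * w + w}"
  by (auto simp: R_def)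

lemma set_QR_Suc: "set (QR (Suc i)) = insert l {t. l + 1 + i * w \<le> t \<and> t < l + i * w + w}"
  by (simp add: QR_def set_R_Suc)

lemma mem_QR_Suc: "t \<in> set (QR (Suc i)) \<longleftrightarrow> t = l \<or> (l + 1 + i * w \<le> t \<and> t < l + i * w + w)"
  by (simp add: set_QR_Suc)

lemma X_Suc: "X (Suc i) = l + i * w + w"
  by (simp add: X_def)

lemma distinct_R: "distinct (R j)"
  by (simp add: R_def)

lemma distinct_QR: "distinct (QR j)"
  by (auto simp: QR_def R_def)

lemma set_R_subset: "i < K \<Longrightarrow> set (R (Suc i)) \<subseteq> {..<n}"
  using mult_add_le_mult[of i K w] by (auto simp: set_R_Suc n_def)

lemma set_QR_subset: "i < K \<Longrightarrow> set (QR (Suc i)) \<subseteq> {..<n}"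
  using mult_add_le_mult[of i K w] by (auto simp: QR_def set_R_Suc n_def)

lemma X_less: "i < K \<Longrightarrow> X (Suc i) < n"
  using mult_add_le_mult[of i K w] by (simp add: X_Suc n_def)

definition counter :: "nat \<Rightarrow> nat" where "counter a = sub_index n C a"
definition qval :: "nat \<Rightarrow> nat" where "qval a = qbit n a l"
definition xval :: "nat \<Rightarrow> nat \<Rightarrow> nat" where "xval j a = qbit n a (X j)"

lemma qval_le_1: "qval a \<le> 1"
  by (simp add: qval_def)

lemma xval_le_1: "xval j a \<le> 1"
  by (simp add: xval_def)

lemma counter_less: "counter a < K"
  using sub_index_less[of n C a] K_eq_pow by (simp add: counter_def)

lemma qbit_counter: "t < l \<Longrightarrow> qbit n a t = qbit l (counter a) t"
  using qbit_sub_index[of t C n a] by (simp add: counter_def C_def)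

lemma counter_eqI: "v < K \<Longrightarrow> (\<And>t. t < l \<Longrightarrow> qbit n a t = qbit l v t) \<Longrightarrow> counter a = v"
  using qbit_eqI[of "counter a" l v] counter_less K_eq_pow qbit_counter by simp

lemma counter_overwrite: "v < K \<Longrightarrow> counter (overwrite n C a v) = v"
  unfolding counter_def using sub_index_overwrite[OF distinct_C set_C_subset, of v a] K_eq_pow by simp

definition inc_gate where "inc_gate = embed n C (U_inc l K)"
definition Q_gate where "Q_gate j = embed n (QR j) Q"
definition CNOT_gate where "CNOT_gate j = embed n [l, X j] CNOT"
definition cinc_gate where "cinc_gate = embed n (l # C) (controlled l (U_inc l K))"

lemma gates_carrier_mat:
  "inc_gate \<in> carrier_mat (2 ^ n) (2 ^ n)" "Q_gate j \<in> carrier_mat (2 ^ n) (2 ^ n)"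
  "CNOT_gate j \<in> carrier_mat (2 ^ n) (2 ^ n)" "cinc_gate \<in> carrier_mat (2 ^ n) (2 ^ n)"
  by (simp_all add: inc_gate_def Q_gate_def CNOT_gate_def cinc_gate_def)

text \<open>The permutation gates map column \<open>dec_counter a\<close> resp.\ \<open>flip_X j a\<close> to row \<open>a\<close>.\<close>

definition dec_counter :: "nat \<Rightarrow> nat" where
  "dec_counter a = overwrite n C a ((counter a + K - qval a) mod K)"

definition flip_X :: "nat \<Rightarrow> nat \<Rightarrow> nat" where
  "flip_X j a = overwrite n [X j] a ((xval j a + qval a) mod 2)"

lemma qbit_dec_counter:
  "t < n \<Longrightarrow> qbit n (dec_counter a) t =
     (if t < l then qbit l ((counter a + K - qval a) mod K) t else qbit n a t)"
  by (simp add: dec_counter_def qbit_overwrite set_C index_of_C)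

lemma qbit_flip_X:
  "t < n \<Longrightarrow> qbit n (flip_X j a) t = (if t = X j then (xval j a + qval a) mod 2 else qbit n a t)"
  unfolding flip_X_def by (simp add: qbit_overwrite) (simp add: qbit_def)

lemma dec_counter_less [simp]: "dec_counter a < 2 ^ n"
  by (simp add: dec_counter_def)

lemma flip_X_less [simp]: "flip_X j a < 2 ^ n"
  by (simp add: flip_X_def)

lemma index_inc_gate_mult:
  assumes M: "M \<in> carrier_mat (2 ^ n) k" and a: "a < 2 ^ n" and b: "b < k"
  shows "(inc_gate * M) $$ (a, b) = M $$ (overwrite n C a ((counter a + K - 1) mod K), b)"
proof -
  have v: "(counter a + K - 1) mod K < 2 ^ length C" using K_pos K_eq_pow by simp
  have "U_inc l K $$ (sub_index n C a, s) = (if s = (counter a + K - 1) mod K then 1 else 0)"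
    if "s < 2 ^ length C" for s
    using index_U_inc_full[of "counter a" l s] that counter_less K_eq_pow by (simp add: counter_def)
  then show ?thesis
    unfolding inc_gate_def by (rule index_embed_mult_permutation[OF distinct_C set_C_subset M a b _ v])
qed

lemma index_cinc_gate_mult:
  assumes M: "M \<in> carrier_mat (2 ^ n) k" and a: "a < 2 ^ n" and b: "b < k"
  shows "(cinc_gate * M) $$ (a, b) = M $$ (dec_counter a, b)"
proof -
  let ?c = "(counter a + K - qval a) mod K"
  let ?v = "qval a * 2 ^ l + ?c"
  have q: "qval a \<le> 1" by (rule qval_le_1)
  have c: "?c < 2 ^ l" using K_pos K_eq_pow by simp
  have x: "sub_index n (l # C) a = qval a * 2 ^ l + counter a"
    by (simp add: sub_index_Cons qval_def counter_def)
  have q01: "qval a = 0 \<or> qval a = 1" using q by auto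
  then have v: "?v < 2 ^ length (l # C)"
    using c by auto
  have G: "controlled l (U_inc l K) $$ (sub_index n (l # C) a, s) = (if s = ?v then 1 else 0)"
    if "s < 2 ^ length (l # C)" for s
    using q01 that index_controlled_U_inc[of "sub_index n (l # C) a" l s] counter_less[of a] K_eq_pow
    unfolding x by auto
  have "distinct (l # C)" "set (l # C) \<subseteq> {..<n}"
    using distinct_C set_C_subset l_less_n by (auto simp: set_C)
  then have "(cinc_gate * M) $$ (a, b) = M $$ (overwrite n (l # C) a ?v, b)"
    unfolding cinc_gate_def by (rule index_embed_mult_permutation[OF _ _ M a b G v])
  also have "overwrite n (l # C) a ?v = dec_counter a"
  proof (rule qbit_eqI[OF overwrite_less dec_counter_less])
    fix t assume t: "t < n"
    show "qbit n (overwrite n (l # C) a ?v) t = qbit n (dec_counter a) t"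
    proof (cases "t < l")
      case True
      then show ?thesis unfolding qbit_dec_counter[OF t]
        using t qbit_Suc_low[OF q c True] by (simp add: qbit_overwrite set_C index_of_C)
    next
      case False
      then show ?thesis unfolding qbit_dec_counter[OF t]
        using t qbit_Suc_high[OF q c] by (auto simp: qbit_overwrite set_C qval_def)
    qed
  qed
  finally show ?thesis .
qed

lemma index_CNOT_gate_mult:
  assumes i: "i < K" and M: "M \<in> carrier_mat (2 ^ n) k" and a: "a < 2 ^ n" and b: "b < k"
  shows "(CNOT_gate (Suc i) * M) $$ (a, b) = M $$ (flip_X (Suc i) a, b)"
proof -
  let ?y = "2 * qval a + xval (Suc i) a"
  let ?v = "if ?y < 2 then ?y else 5 - ?y"
  have X: "X (Suc i) < n" "X (Suc i) \<noteq> l" using X_less[OF i] w_pos by (auto simp: X_Suc)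
  have y: "sub_index n [l, X (Suc i)] a = ?y"
    by (simp add: sub_index_pair qval_def xval_def)
  have "?y < 4" using qval_le_1[of a] xval_le_1[of "Suc i" a] by linarith
  then have v: "?v < 2 ^ length [l, X (Suc i)]" by auto
  have G: "CNOT $$ (sub_index n [l, X (Suc i)] a, s) = (if s = ?v then 1 else 0)"
    if "s < 2 ^ length [l, X (Suc i)]" for s
    using index_CNOT[of ?y s] that \<open>?y < 4\<close> unfolding y by simp
  have "distinct [l, X (Suc i)]" "set [l, X (Suc i)] \<subseteq> {..<n}"
    using X l_less_n by auto
  then have "(CNOT_gate (Suc i) * M) $$ (a, b) = M $$ (overwrite n [l, X (Suc i)] a ?v, b)"
    unfolding CNOT_gate_def by (rule index_embed_mult_permutation[OF _ _ M a b G v])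
  also have "overwrite n [l, X (Suc i)] a ?v = flip_X (Suc i) a"
  proof (rule qbit_eqI[OF overwrite_less flip_X_less])
    fix t assume t: "t < n"
    note bits = bit_pair_CNOT[OF qval_le_1[of a] xval_le_1[of "Suc i" a]]
    show "qbit n (overwrite n [l, X (Suc i)] a ?v) t = qbit n (flip_X (Suc i) a) t"
      unfolding qbit_flip_X[OF t]
      using t X bits by (auto simp: qbit_overwrite qval_def)
  qed
  finally show ?thesis .
qed

lemma index_Q_gate_mult:
  assumes i: "i < K" and M: "M \<in> carrier_mat (2 ^ n) k" and a: "a < 2 ^ n" and b: "b < k"
  shows "(Q_gate (Suc i) * M) $$ (a, b) =
    (\<Sum>s<2 ^ w. Q $$ (sub_index n (QR (Suc i)) a, s) * M $$ (overwrite n (QR (Suc i)) a s, b))"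
  unfolding Q_gate_def using index_embed_mult[OF distinct_QR set_QR_subset[OF i] M a b, of Q] by simp

text \<open>\<open>undo_ctrl j a\<close> is the basis state which the CNOT and the controlled increment of block \<open>j\<close>
  map to \<open>a\<close>.\<close>

definition undo_ctrl :: "nat \<Rightarrow> nat \<Rightarrow> nat" where
  "undo_ctrl j a = flip_X j (dec_counter a)"

lemma undo_ctrl_less [simp]: "undo_ctrl j a < 2 ^ n"
  by (simp add: undo_ctrl_def)

lemma qbit_undo_ctrl:
  assumes i: "i < K" and t: "t < n"
  shows "qbit n (undo_ctrl (Suc i) a) t =
    (if t < l then qbit l ((counter a + K - qval a) mod K) t
     else if t = X (Suc i) then (xval (Suc i) a + qval a) mod 2 else qbit n a t)"
proof -
  have X: "l < X (Suc i)" using w_pos by (simp add: X_Suc)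
  have "xval (Suc i) (dec_counter a) = xval (Suc i) a" "qval (dec_counter a) = qval a"
    unfolding xval_def qval_def using qbit_dec_counter[OF X_less[OF i]] qbit_dec_counter[OF l_less_n] X
    by simp_all
  then show ?thesis
    unfolding undo_ctrl_def qbit_flip_X[OF t] using qbit_dec_counter[OF t] X by auto
qed

lemma sub_index_QR_undo_ctrl:
  assumes j: "j < K"
  shows "sub_index n (QR (Suc j)) (undo_ctrl (Suc j) a) = sub_index n (QR (Suc j)) a"
proof (rule sub_index_cong)
  fix t assume t: "t \<in> set (QR (Suc j))"
  then have "t < n" using set_QR_subset[OF j] by auto
  moreover have "\<not> t < l" "t \<noteq> X (Suc j)" using t w_pos by (auto simp: set_QR_Suc X_Suc)
  ultimately show "qbit n (undo_ctrl (Suc j) a) t = qbit n a t" using qbit_undo_ctrl[OF j] by simp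
qed

lemma index_block_mult:
  assumes i: "i < K" and M: "M \<in> carrier_mat (2 ^ n) (2 ^ n)" and a: "a < 2 ^ n" and b: "b < 2 ^ n"
  shows "(cinc_gate * (CNOT_gate (Suc i) * (Q_gate (Suc i) * M))) $$ (a, b) =
    (\<Sum>s<2 ^ w. Q $$ (sub_index n (QR (Suc i)) a, s) *
                M $$ (overwrite n (QR (Suc i)) (undo_ctrl (Suc i) a) s, b))"
proof -
  have M1: "Q_gate (Suc i) * M \<in> carrier_mat (2 ^ n) (2 ^ n)"
    using gates_carrier_mat M by (meson mult_carrier_mat)
  have M2: "CNOT_gate (Suc i) * (Q_gate (Suc i) * M) \<in> carrier_mat (2 ^ n) (2 ^ n)"
    using gates_carrier_mat M1 by (meson mult_carrier_mat)
  have "(cinc_gate * (CNOT_gate (Suc i) * (Q_gate (Suc i) * M))) $$ (a, b) =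
        (CNOT_gate (Suc i) * (Q_gate (Suc i) * M)) $$ (dec_counter a, b)"
    by (rule index_cinc_gate_mult[OF M2 a b])
  also have "\<dots> = (Q_gate (Suc i) * M) $$ (undo_ctrl (Suc i) a, b)"
    unfolding undo_ctrl_def by (rule index_CNOT_gate_mult[OF i M1 dec_counter_less b])
  also have "\<dots> = (\<Sum>s<2 ^ w. Q $$ (sub_index n (QR (Suc i)) (undo_ctrl (Suc i) a), s) *
                              M $$ (overwrite n (QR (Suc i)) (undo_ctrl (Suc i) a) s, b))"
    by (rule index_Q_gate_mult[OF i M undo_ctrl_less b])
  finally show ?thesis unfolding sub_index_QR_undo_ctrl[OF i] .
qed

definition prep where "prep = circuit n (replicate N inc_gate)"

definition stage where
  "stage j = foldl (\<lambda>M G. G * M) prep (concat (map (\<lambda>j. [Q_gate j, CNOT_gate j, cinc_gate]) [1..<j + 1]))"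

lemma R2_eq_stage: "R2 N w Q = stage K"
proof -
  have l: "R2_l N = l" by (simp add: R2_l_def l_def N_eq)
  have n: "R2_n N w = n" by (simp add: R2_n_def l n_def K_def)
  have r: "R2_R N w = R" by (rule ext) (simp add: R2_R_def R_def l)
  have x: "R2_X N w = X" by (rule ext) (simp add: R2_X_def X_def l)
  have k: "8 * N = K" by (simp add: K_def)
  show ?thesis
    unfolding R2_def Let_def l n r x k circuit_def stage_def prep_def inc_gate_def Q_gate_def
      CNOT_gate_def cinc_gate_def C_def QR_def foldl_append
    by (rule refl)
qed

lemma stage_Suc: "stage (Suc j) = cinc_gate * (CNOT_gate (Suc j) * (Q_gate (Suc j) * stage j))"
  unfolding stage_def by simp

lemma inc_gates_carrier_mat:
  "foldl (\<lambda>M G. G * M) (1\<^sub>m (2 ^ n)) (replicate r inc_gate) \<in> carrier_mat (2 ^ n) (2 ^ n)"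
  by (induction r) (auto simp: replicate_append_same[symmetric] intro!: mult_carrier_mat[OF gates_carrier_mat(1)])

lemma stage_carrier_mat: "stage j \<in> carrier_mat (2 ^ n) (2 ^ n)"
proof (induction j)
  case 0
  then show ?case using inc_gates_carrier_mat by (simp add: stage_def prep_def circuit_def)
next
  case (Suc j)
  then show ?case unfolding stage_Suc using gates_carrier_mat by (meson mult_carrier_mat)
qed

lemma eq_overwrite_C_iff:
  assumes a: "a < 2 ^ n" and v: "v < K"
  shows "a = overwrite n C b v \<longleftrightarrow> (\<forall>t<n. l \<le> t \<longrightarrow> qbit n a t = qbit n b t) \<and> counter a = v"
proof
  assume "a = overwrite n C b v"
  then show "(\<forall>t<n. l \<le> t \<longrightarrow> qbit n a t = qbit n b t) \<and> counter a = v"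
    using v by (auto simp: qbit_overwrite set_C counter_overwrite)
next
  assume h: "(\<forall>t<n. l \<le> t \<longrightarrow> qbit n a t = qbit n b t) \<and> counter a = v"
  show "a = overwrite n C b v"
  proof (rule qbit_eqI[OF a overwrite_less])
    fix t assume t: "t < n"
    show "qbit n a t = qbit n (overwrite n C b v) t"
    proof (cases "t < l")
      case True
      then have "qbit n (overwrite n C b v) t = qbit l v t"
        using t by (simp add: qbit_overwrite set_C index_of_C)
      then show ?thesis using qbit_counter[OF True, of a] h by simp
    next
      case False
      then show ?thesis using h t by (simp add: qbit_overwrite set_C)
    qed
  qed
qed

lemma overwrite_C_eq_iff:
  assumes "a < 2 ^ n" "b < 2 ^ n" "v1 < K" "v2 < K"
  shows "overwrite n C a v1 = overwrite n C b v2 \<longleftrightarrow>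
         (\<forall>t<n. l \<le> t \<longrightarrow> qbit n a t = qbit n b t) \<and> v1 = v2"
  using eq_overwrite_C_iff[OF overwrite_less assms(4), of C a v1] assms(3)
  by (auto simp: qbit_overwrite set_C counter_overwrite)

lemma index_inc_gates:
  assumes b: "b < 2 ^ n"
  shows "a < 2 ^ n \<Longrightarrow> foldl (\<lambda>M G. G * M) (1\<^sub>m (2 ^ n)) (replicate r inc_gate) $$ (a, b) =
           (if a = overwrite n C b ((counter b + r) mod K) then 1 else 0)"
proof (induction r arbitrary: a)
  case 0
  have "overwrite n C b (counter b) = b"
    unfolding counter_def using overwrite_sub_index[OF b set_C_subset] .
  moreover have "counter b mod K = counter b" using counter_less by simp
  ultimately show ?case using b "0.prems" by auto
next
  case (Suc r)
  note a = Suc.prems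
  let ?P = "foldl (\<lambda>M G. G * M) (1\<^sub>m (2 ^ n)) (replicate r inc_gate)"
  let ?a' = "overwrite n C a ((counter a + K - 1) mod K)"
  have "foldl (\<lambda>M G. G * M) (1\<^sub>m (2 ^ n)) (replicate (Suc r) inc_gate) $$ (a, b) = (inc_gate * ?P) $$ (a, b)"
    by (simp only: replicate_Suc replicate_append_same[symmetric] foldl_append foldl.simps)
  also have "\<dots> = ?P $$ (?a', b)"
    by (rule index_inc_gate_mult[OF inc_gates_carrier_mat a b])
  also have "\<dots> = (if ?a' = overwrite n C b ((counter b + r) mod K) then 1 else 0)"
    using Suc.IH by simp
  also have "?a' = overwrite n C b ((counter b + r) mod K) \<longleftrightarrow>
      (\<forall>t<n. l \<le> t \<longrightarrow> qbit n a t = qbit n b t) \<and> (counter a + K - 1) mod K = (counter b + r) mod K"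
    using K_pos by (intro overwrite_C_eq_iff[OF a b]) auto
  also have "(counter a + K - 1) mod K = (counter b + r) mod K \<longleftrightarrow> counter a = (counter b + Suc r) mod K"
    using mod_add_sub_eq_iff[OF K_pos counter_less[of a], of 1 "counter b + r"] K_pos by simp
  also have "(\<forall>t<n. l \<le> t \<longrightarrow> qbit n a t = qbit n b t) \<and> counter a = (counter b + Suc r) mod K \<longleftrightarrow>
      a = overwrite n C b ((counter b + Suc r) mod K)"
    using K_pos by (intro eq_overwrite_C_iff[OF a, symmetric]) auto
  finally show ?case .
qed

lemma index_prep:
  "a < 2 ^ n \<Longrightarrow> b < 2 ^ n \<Longrightarrow> prep $$ (a, b) = (if a = overwrite n C b ((counter b + N) mod K) then 1 else 0)"
  unfolding prep_def circuit_def by (rule index_inc_gates)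

text \<open>The CNOT of block \<open>i\<close> flips \<open>X\<^sub>i\<close> iff \<open>Q\<close> is 1 after the \<open>i\<close>-th application of \<open>Q\<close>, so
  \<open>flipped i b a\<close> is that bit on the branch from input \<open>b\<close> to output \<open>a\<close>.\<close>

definition flipped :: "nat \<Rightarrow> nat \<Rightarrow> nat \<Rightarrow> nat" where
  "flipped i b a = (if xval i a = xval i b then 0 else 1)"

definition nflips :: "nat \<Rightarrow> nat \<Rightarrow> nat \<Rightarrow> nat" where
  "nflips j b a = (\<Sum>i<j. flipped (Suc i) b a)"

definition reachable :: "nat \<Rightarrow> nat \<Rightarrow> nat \<Rightarrow> bool" where
  "reachable j b a \<longleftrightarrow> (\<forall>t<n. l + j * w < t \<longrightarrow> qbit n a t = qbit n b t) \<and>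
     counter a = (counter b + N + nflips j b a) mod K \<and>
     qval a = (if j = 0 then qval b else flipped j b a)"

lemma X_notin_QR: "i \<le> j \<Longrightarrow> X (Suc i) \<notin> set (QR (Suc j)) \<and> \<not> X (Suc i) < l"
  using mult_add_le_mult[of i j w] w_pos by (cases "i = j") (auto simp: mem_QR_Suc X_Suc)

lemma X_neq: "i < j \<Longrightarrow> X (Suc i) \<noteq> X (Suc j)"
  using mult_add_le_mult[of i j w] w_pos by (auto simp: X_Suc)

lemma xval_overwrite_QR:
  "i \<le> j \<Longrightarrow> j < K \<Longrightarrow> xval (Suc i) (overwrite n (QR (Suc j)) c s) = xval (Suc i) c"
  unfolding xval_def using X_less[of i] X_notin_QR[of i j] by (simp add: qbit_overwrite)

lemma xval_undo_ctrl: "i < j \<Longrightarrow> j < K \<Longrightarrow> xval (Suc i) (undo_ctrl (Suc j) a) = xval (Suc i) a"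
  unfolding xval_def using X_less[of i] X_notin_QR[of i j] X_neq[of i j] qbit_undo_ctrl[of j] by simp

lemma xval_Suc_undo_ctrl: "j < K \<Longrightarrow> xval (Suc j) (undo_ctrl (Suc j) a) = (xval (Suc j) a + qval a) mod 2"
  using qbit_undo_ctrl[OF _ X_less, of j j a] w_pos by (simp add: X_Suc xval_def)

lemma qval_undo_ctrl: "j < K \<Longrightarrow> qval (undo_ctrl (Suc j) a) = qval a"
  unfolding qval_def using qbit_undo_ctrl[OF _ l_less_n, of j a] w_pos by (simp add: X_Suc)

lemma qval_overwrite_QR: "j < K \<Longrightarrow> qval (overwrite n (QR (Suc j)) c s) = qbit w s 0"
  unfolding qval_def using l_less_n w_pos by (simp add: qbit_overwrite QR_def)

lemma flipped_overwrite_QR_undo_ctrl: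
  "i < j \<Longrightarrow> j < K \<Longrightarrow> flipped (Suc i) b (overwrite n (QR (Suc j)) (undo_ctrl (Suc j) a) s) = flipped (Suc i) b a"
  unfolding flipped_def by (simp add: xval_overwrite_QR xval_undo_ctrl)

lemma counter_overwrite_QR_undo_ctrl:
  assumes j: "j < K"
  shows "counter (overwrite n (QR (Suc j)) (undo_ctrl (Suc j) a) s) = (counter a + K - qval a) mod K"
proof (rule counter_eqI)
  show "(counter a + K - qval a) mod K < K" using K_pos by simp
  fix t assume t: "t < l"
  then have "t < n" "t \<notin> set (QR (Suc j))" by (auto simp: mem_QR_Suc n_def)
  then show "qbit n (overwrite n (QR (Suc j)) (undo_ctrl (Suc j) a) s) t = qbit l ((counter a + K - qval a) mod K) t"
    using t by (simp add: qbit_overwrite qbit_undo_ctrl[OF j])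
qed

lemma reachable_prep:
  assumes a: "a < 2 ^ n" and b: "b < 2 ^ n" and nz: "prep $$ (a, b) \<noteq> 0"
  shows "reachable 0 b a"
proof -
  have e: "a = overwrite n C b ((counter b + N) mod K)"
    using nz index_prep[OF a b] by (simp split: if_splits)
  have "counter a = (counter b + N) mod K" using K_pos by (subst e) (simp add: counter_overwrite)
  moreover have "qbit n a t = qbit n b t" if "t < n" "l \<le> t" for t
    using that unfolding e by (simp add: qbit_overwrite set_C)
  ultimately show ?thesis
    using l_less_n unfolding reachable_def qval_def nflips_def by simp
qed

lemma reachable_Suc:
  assumes j: "j < K" and a: "a < 2 ^ n"
    and r: "reachable j b (overwrite n (QR (Suc j)) (undo_ctrl (Suc j) a) s)"
  shows "reachable (Suc j) b a"
proof -
  let ?a' = "overwrite n (QR (Suc j)) (undo_ctrl (Suc j) a) s"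
  have X: "X (Suc j) < n" "l + j * w < X (Suc j)" using X_less[OF j] w_pos by (auto simp: X_Suc)
  have "xval (Suc j) ?a' = xval (Suc j) b"
    using r X unfolding reachable_def xval_def by auto
  then have "(xval (Suc j) a + qval a) mod 2 = xval (Suc j) b"
    by (simp add: xval_overwrite_QR[OF le_refl j] xval_Suc_undo_ctrl[OF j])
  then have qval: "qval a = flipped (Suc j) b a"
    unfolding flipped_def using bit_add_mod2_eq_iff[OF xval_le_1 xval_le_1 qval_le_1] by blast
  have "nflips j b ?a' = nflips j b a"
    unfolding nflips_def using j by (intro sum.cong refl) (simp add: flipped_overwrite_QR_undo_ctrl)
  then have "(counter a + K - qval a) mod K = (counter b + N + nflips j b a) mod K"
    using r unfolding reachable_def counter_overwrite_QR_undo_ctrl[OF j] by simp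
  then have "counter a = (counter b + N + nflips j b a + qval a) mod K"
    using mod_add_sub_eq_iff[OF K_pos counter_less[of a], of "qval a"] qval_le_1[of a] K_pos by simp
  then have counter: "counter a = (counter b + N + nflips (Suc j) b a) mod K"
    using qval by (simp add: nflips_def add.assoc)
  have "qbit n a t = qbit n b t" if t: "t < n" "l + Suc j * w < t" for t
  proof -
    have "t \<notin> set (QR (Suc j))" "\<not> t < l" "t \<noteq> X (Suc j)" "l + j * w < t"
      using t by (auto simp: mem_QR_Suc X_Suc)
    then show ?thesis using r t(1) unfolding reachable_def by (auto simp: qbit_overwrite qbit_undo_ctrl[OF j])
  qed
  then show ?thesis unfolding reachable_def using counter qval by auto
qed

lemma reachable_if_nonzero:
  "j \<le> K \<Longrightarrow> a < 2 ^ n \<Longrightarrow> b < 2 ^ n \<Longrightarrow> stage j $$ (a, b) \<noteq> 0 \<Longrightarrow> reachable j b a"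
proof (induction j arbitrary: a)
  case 0
  then show ?case using reachable_prep by (simp add: stage_def)
next
  case (Suc j)
  then have j: "j < K" by simp
  let ?a' = "\<lambda>s. overwrite n (QR (Suc j)) (undo_ctrl (Suc j) a) s"
  have "(\<Sum>s<2 ^ w. Q $$ (sub_index n (QR (Suc j)) a, s) * stage j $$ (?a' s, b)) \<noteq> 0"
    using Suc.prems unfolding stage_Suc index_block_mult[OF j stage_carrier_mat Suc.prems(2,3)] by simp
  then obtain s where "Q $$ (sub_index n (QR (Suc j)) a, s) * stage j $$ (?a' s, b) \<noteq> 0"
    by (rule sum.not_neutral_contains_not_neutral)
  then have "reachable j b (?a' s)" using Suc.IH[of "?a' s"] Suc.prems j by simp
  then show ?case by (rule reachable_Suc[OF j Suc.prems(2)])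
qed

section \<open>Branches with constant records\<close>

definition records :: "nat \<Rightarrow> nat \<Rightarrow> nat \<Rightarrow> nat \<Rightarrow> bool" where
  "records j b t a \<longleftrightarrow> (\<forall>i<j. flipped (Suc i) b a = t)"

definition branch_weight :: "nat \<Rightarrow> nat \<Rightarrow> nat \<Rightarrow> real" where
  "branch_weight j b t = (\<Sum>a<2 ^ n. if records j b t a then (cmod (stage j $$ (a, b)))\<^sup>2 else 0)"

text \<open>On the branch from \<open>b\<close> whose first \<open>j\<close> records all equal \<open>t\<close>, the \<open>(j+1)\<close>-th application
  of \<open>Q\<close> sees \<open>Q\<close> in state \<open>q_in j b t\<close> and \<open>R\<^sub>j\<^sub>+\<^sub>1\<close> untouched, i.e.\ the column \<open>branch_col j b t\<close>.\<close>

definition q_in :: "nat \<Rightarrow> nat \<Rightarrow> nat \<Rightarrow> nat" where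
  "q_in j b t = (if j = 0 then qval b else t)"

definition branch_col :: "nat \<Rightarrow> nat \<Rightarrow> nat \<Rightarrow> nat" where
  "branch_col j b t = q_in j b t * 2 ^ (w - 1) + sub_index n (R (Suc j)) b"

lemma sub_index_QR: "sub_index n (QR j) a = qval a * 2 ^ (w - 1) + sub_index n (R j) a"
  by (simp add: QR_def sub_index_Cons qval_def)

lemma records_Suc: "records (Suc j) b t a \<longleftrightarrow> records j b t a \<and> flipped (Suc j) b a = t"
  unfolding records_def less_Suc_eq by auto

lemma records_overwrite_QR: "j < K \<Longrightarrow> records j b t (overwrite n (QR (Suc j)) c s) = records j b t c"
  unfolding records_def flipped_def using xval_overwrite_QR by simp

lemma records_undo_ctrl: "j < K \<Longrightarrow> records j b t (undo_ctrl (Suc j) a) = records j b t a"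
  unfolding records_def flipped_def using xval_undo_ctrl by simp

lemma branch_col_less:
  assumes t: "t \<le> 1"
  shows "branch_col j b t < 2 ^ w"
proof -
  have "q_in j b t * 2 ^ (w - 1) \<le> 1 * 2 ^ (w - 1)"
    using t qval_le_1 by (intro mult_le_mono1) (simp add: q_in_def)
  moreover have "sub_index n (R (Suc j)) b < 2 ^ (w - 1)"
    using sub_index_less[of n "R (Suc j)" b] by simp
  ultimately show ?thesis
    unfolding branch_col_def power_eq_double_pred[OF w_pos] by linarith
qed

lemma eq_branch_col_if_nonzero:
  assumes j: "j < K" and b: "b < 2 ^ n" and rec: "j = 0 \<or> records j b t c" and s: "s < 2 ^ w"
    and nz: "stage j $$ (overwrite n (QR (Suc j)) c s, b) \<noteq> 0"
  shows "s = branch_col j b t"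
proof -
  let ?a = "overwrite n (QR (Suc j)) c s"
  have r: "reachable j b ?a" using reachable_if_nonzero[of j ?a b] j b nz by simp
  have "sub_index n (R (Suc j)) ?a = sub_index n (R (Suc j)) b"
  proof (rule sub_index_cong)
    fix t assume "t \<in> set (R (Suc j))"
    then have "t < n" "l + j * w < t" using set_R_subset[OF j] by (auto simp: set_R_Suc)
    then show "qbit n ?a t = qbit n b t" using r unfolding reachable_def by auto
  qed
  moreover have "qval ?a = q_in j b t"
  proof (cases j)
    case 0
    then show ?thesis using r unfolding reachable_def q_in_def by simp
  next
    case (Suc i)
    have "flipped j b ?a = flipped j b c"
      unfolding flipped_def Suc using xval_overwrite_QR[of i j c s] j Suc by simp
    then show ?thesis using r rec Suc unfolding reachable_def q_in_def records_def by simp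
  qed
  moreover have "sub_index n (QR (Suc j)) ?a = s"
    using sub_index_overwrite[OF distinct_QR set_QR_subset[OF j]] s by simp
  ultimately show ?thesis using sub_index_QR[of "Suc j" ?a] by (simp add: branch_col_def)
qed

lemma inj_on_undo_ctrl:
  assumes j: "j < K"
  shows "inj_on (undo_ctrl (Suc j)) {..<2 ^ n}"
proof (rule inj_onI)
  fix a a' assume a: "a \<in> {..<2 ^ n}" and a': "a' \<in> {..<2 ^ n}"
    and e: "undo_ctrl (Suc j) a = undo_ctrl (Suc j) a'"
  have q: "qval a = qval a'" using qval_undo_ctrl[OF j, of a] qval_undo_ctrl[OF j, of a'] e by simp
  let ?y = "(counter a + K - qval a) mod K" and ?y' = "(counter a' + K - qval a) mod K"
  have "?y = ?y'"
  proof (rule qbit_eqI[of _ l])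
    show "?y < 2 ^ l" "?y' < 2 ^ l" using K_pos K_eq_pow by simp_all
    fix t assume t: "t < l"
    then have "t < n" by (simp add: n_def)
    then show "qbit l ?y t = qbit l ?y' t"
      using qbit_undo_ctrl[OF j, of t a] qbit_undo_ctrl[OF j, of t a'] e q t by simp
  qed
  moreover have "counter a = (?y + qval a) mod K"
    using mod_add_sub_eq_iff[OF K_pos counter_less[of a], of "qval a" ?y] qval_le_1[of a] K_pos by simp
  moreover have "counter a' = (?y' + qval a) mod K"
    using mod_add_sub_eq_iff[OF K_pos counter_less[of a'], of "qval a" ?y'] qval_le_1[of a] K_pos by simp
  ultimately have c: "counter a = counter a'" by simp
  have "(xval (Suc j) a + qval a) mod 2 = (xval (Suc j) a' + qval a) mod 2"
    using xval_Suc_undo_ctrl[OF j, of a] xval_Suc_undo_ctrl[OF j, of a'] e q by simp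
  then have x: "xval (Suc j) a = xval (Suc j) a'"
    using bit_add_mod2_cancel[OF xval_le_1 xval_le_1 qval_le_1] by blast
  show "a = a'"
  proof (rule qbit_eqI[of _ n])
    show "a < 2 ^ n" "a' < 2 ^ n" using a a' by auto
    fix t assume t: "t < n"
    show "qbit n a t = qbit n a' t"
      using qbit_counter[of t a] qbit_counter[of t a'] c x
        qbit_undo_ctrl[OF j t, of a] qbit_undo_ctrl[OF j t, of a'] e
      by (cases "t < l") (auto simp: xval_def split: if_splits)
  qed
qed

lemma sum_undo_ctrl:
  assumes j: "j < K"
  shows "(\<Sum>a<2 ^ n. F (undo_ctrl (Suc j) a)) = (\<Sum>c<2 ^ n. F c)"
proof -
  have "undo_ctrl (Suc j) ` {..<2 ^ n} = {..<2 ^ n}"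
    by (rule endo_inj_surj) (auto simp: inj_on_undo_ctrl[OF j])
  then show ?thesis
    using sum.reindex[OF inj_on_undo_ctrl[OF j], of F] by simp
qed

lemma index_stage_Suc_records:
  assumes j: "j < K" and t: "t \<le> 1" and a: "a < 2 ^ n" and b: "b < 2 ^ n"
    and rec: "records (Suc j) b t a"
  shows "stage (Suc j) $$ (a, b) = Q $$ (sub_index n (QR (Suc j)) a, branch_col j b t) *
           stage j $$ (overwrite n (QR (Suc j)) (undo_ctrl (Suc j) a) (branch_col j b t), b)"
proof -
  let ?F = "\<lambda>s. Q $$ (sub_index n (QR (Suc j)) a, s) * stage j $$ (overwrite n (QR (Suc j)) (undo_ctrl (Suc j) a) s, b)"
  have rec': "j = 0 \<or> records j b t (undo_ctrl (Suc j) a)"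
    using rec records_Suc records_undo_ctrl[OF j] by simp
  have "stage (Suc j) $$ (a, b) = (\<Sum>s<2 ^ w. ?F s)"
    unfolding stage_Suc by (rule index_block_mult[OF j stage_carrier_mat a b])
  also have "\<dots> = ?F (branch_col j b t)"
    by (rule sum_eq_single)
      (use branch_col_less[OF t] eq_branch_col_if_nonzero[OF j b rec'] in auto)
  finally show ?thesis .
qed

lemma branch_weight_eq_sum_col:
  assumes j: "j < K" and t: "t \<le> 1" and b: "b < 2 ^ n"
  shows "branch_weight j b t = (\<Sum>z\<in>{z. z < 2 ^ n \<and> sub_index n (QR (Suc j)) z = 0}.
    if records j b t z then (cmod (stage j $$ (overwrite n (QR (Suc j)) z (branch_col j b t), b)))\<^sup>2 else 0)"
proof -
  let ?QR = "QR (Suc j)"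
  let ?f = "\<lambda>c. if records j b t c then (cmod (stage j $$ (c, b)))\<^sup>2 else 0"
  have "branch_weight j b t =
      (\<Sum>z\<in>{z. z < 2 ^ n \<and> sub_index n ?QR z = 0}. \<Sum>s<2 ^ w. ?f (overwrite n ?QR z s))"
    unfolding branch_weight_def using sum_split_qubits[OF distinct_QR set_QR_subset[OF j]] by simp
  also have "\<dots> = (\<Sum>z\<in>{z. z < 2 ^ n \<and> sub_index n ?QR z = 0}. ?f (overwrite n ?QR z (branch_col j b t)))"
  proof (intro sum.cong refl sum_eq_single)
    fix z s assume "s \<in> {..<2 ^ w}" "s \<noteq> branch_col j b t"
    then show "?f (overwrite n ?QR z s) = 0"
      using eq_branch_col_if_nonzero[OF j b, of t z s] records_overwrite_QR[OF j] by auto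
  qed (use branch_col_less[OF t] in auto)
  finally show ?thesis
    by (simp add: records_overwrite_QR[OF j])
qed

lemma branch_weight_Suc:
  assumes j: "j < K" and t: "t \<le> 1" and b: "b < 2 ^ n"
  shows "branch_weight (Suc j) b t =
    trans_weight w Q (q_in j b t) t (sub_index n (R (Suc j)) b) * branch_weight j b t"
proof -
  let ?col = "branch_col j b t"
  let ?QR = "QR (Suc j)"
  let ?Z = "{z. z < 2 ^ n \<and> sub_index n ?QR z = 0}"
  define rec' where "rec' c = (if (xval (Suc j) c + qval c) mod 2 = xval (Suc j) b then 0 else (1::nat))" for c
  define F where "F c = (if records j b t c \<and> rec' c = t then
      (cmod (Q $$ (sub_index n ?QR c, ?col)))\<^sup>2 * (cmod (stage j $$ (overwrite n ?QR c ?col, b)))\<^sup>2 else 0)" for c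
  define G where "G z = (if records j b t z then (cmod (stage j $$ (overwrite n ?QR z ?col, b)))\<^sup>2 else 0)" for z
  define g where "g s = (if qbit w s 0 = t then (cmod (Q $$ (s, ?col)))\<^sup>2 else 0)" for s
  have "branch_weight (Suc j) b t = (\<Sum>a<2 ^ n. F (undo_ctrl (Suc j) a))"
    unfolding branch_weight_def
  proof (intro sum.cong refl)
    fix a assume a: "a \<in> {..<(2::nat) ^ n}"
    have "rec' (undo_ctrl (Suc j) a) = flipped (Suc j) b a"
      unfolding rec'_def flipped_def xval_Suc_undo_ctrl[OF j] qval_undo_ctrl[OF j]
      using bit_add_mod2_twice[OF xval_le_1 qval_le_1, of "Suc j" a a] by simp
    then have "records j b t (undo_ctrl (Suc j) a) \<and> rec' (undo_ctrl (Suc j) a) = t \<longleftrightarrow> records (Suc j) b t a"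
      using records_undo_ctrl[OF j] records_Suc by simp
    then show "(if records (Suc j) b t a then (cmod (stage (Suc j) $$ (a, b)))\<^sup>2 else 0) = F (undo_ctrl (Suc j) a)"
      using index_stage_Suc_records[OF j t _ b] a unfolding F_def sub_index_QR_undo_ctrl[OF j]
      by (simp add: norm_mult power_mult_distrib)
  qed
  also have "\<dots> = (\<Sum>c<2 ^ n. F c)"
    by (rule sum_undo_ctrl[OF j])
  also have "\<dots> = (\<Sum>z\<in>?Z. \<Sum>s<2 ^ length ?QR. F (overwrite n ?QR z s))"
    by (rule sum_split_qubits[OF distinct_QR set_QR_subset[OF j]])
  also have "\<dots> = (\<Sum>z\<in>?Z. \<Sum>s<2 ^ w. G z * g s)"
    unfolding length_QR
  proof (intro sum.cong refl)
    fix z s assume s: "s \<in> {..<(2::nat) ^ w}"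
    have "rec' (overwrite n ?QR z s) = qbit w s 0" if "stage j $$ (overwrite n ?QR z ?col, b) \<noteq> 0"
    proof -
      have "reachable j b (overwrite n ?QR z ?col)"
        using reachable_if_nonzero[of j _ b] j b that by simp
      moreover have "X (Suc j) < n" "l + j * w < X (Suc j)" using X_less[OF j] w_pos by (auto simp: X_Suc)
      ultimately have "xval (Suc j) z = xval (Suc j) b"
        using xval_overwrite_QR[of j j z ?col] j unfolding reachable_def xval_def by auto
      then show ?thesis
        unfolding rec'_def xval_overwrite_QR[OF le_refl j] qval_overwrite_QR[OF j]
        using bit_add_mod2_self[OF xval_le_1 qbit_le_1(1), of "Suc j" b w s 0] by simp
    qed
    moreover have "sub_index n ?QR (overwrite n ?QR z s) = s"
      using s sub_index_overwrite[OF distinct_QR set_QR_subset[OF j]] by simp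
    ultimately show "F (overwrite n ?QR z s) = G z * g s"
      unfolding F_def G_def g_def records_overwrite_QR[OF j] overwrite_overwrite
      by (cases "stage j $$ (overwrite n ?QR z ?col, b) = 0") auto
  qed
  also have "\<dots> = (\<Sum>z\<in>?Z. G z) * (\<Sum>s<2 ^ w. g s)"
    by (rule sum_product[symmetric])
  also have "(\<Sum>s<2 ^ w. g s) = trans_weight w Q (q_in j b t) t (sub_index n (R (Suc j)) b)"
    unfolding g_def trans_weight_def using sum_top_qubit[OF w_pos t, of "\<lambda>s. (cmod (Q $$ (s, ?col)))\<^sup>2"]
    by (simp add: branch_col_def)
  also have "(\<Sum>z\<in>?Z. G z) = branch_weight j b t"
    unfolding G_def by (rule branch_weight_eq_sum_col[OF j t b, symmetric])
  finally show ?thesis by simp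
qed

lemma branch_weight_0: "b < 2 ^ n \<Longrightarrow> branch_weight 0 b t = 1"
proof -
  assume b: "b < 2 ^ n"
  let ?b' = "overwrite n C b ((counter b + N) mod K)"
  have "branch_weight 0 b t = (\<Sum>a<2 ^ n. (cmod (prep $$ (a, b)))\<^sup>2)"
    unfolding branch_weight_def records_def by (simp add: stage_def)
  also have "\<dots> = (cmod (prep $$ (?b', b)))\<^sup>2"
    by (rule sum_eq_single) (use index_prep b in auto)
  also have "\<dots> = 1" using index_prep[of ?b' b] b by simp
  finally show ?thesis .
qed

definition branch_prod :: "nat \<Rightarrow> nat \<Rightarrow> nat \<Rightarrow> real" where
  "branch_prod j b t = (\<Prod>i<j. trans_weight w Q (q_in i b t) t (sub_index n (R (Suc i)) b))"

lemma branch_weight_eq_prod: "j \<le> K \<Longrightarrow> t \<le> 1 \<Longrightarrow> b < 2 ^ n \<Longrightarrow> branch_weight j b t = branch_prod j b t"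
proof (induction j)
  case 0
  then show ?case using branch_weight_0 by (simp add: branch_prod_def)
next
  case (Suc j)
  then show ?case using branch_weight_Suc[of j t b] by (simp add: branch_prod_def)
qed

lemma branch_prod_overwrite_R:
  assumes j: "Suc j < K"
  shows "branch_prod (Suc j) (overwrite n (R (Suc (Suc j))) b s) t = branch_prod (Suc j) b t"
  unfolding branch_prod_def
proof (intro prod.cong refl)
  fix i assume i: "i \<in> {..<Suc j}"
  let ?b = "overwrite n (R (Suc (Suc j))) b s"
  have "q_in i ?b t = q_in i b t"
    unfolding q_in_def qval_def using l_less_n by (simp add: qbit_overwrite set_R_Suc)
  moreover have "sub_index n (R (Suc i)) ?b = sub_index n (R (Suc i)) b"
  proof (rule sub_index_cong)
    fix t assume t: "t \<in> set (R (Suc i))"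
    have "i * w + w \<le> w + j * w" using i mult_add_le_mult[of i "Suc j" w] by simp
    moreover have "t < l + i * w + w" using t by (simp add: set_R_Suc)
    ultimately have "t \<notin> set (R (Suc (Suc j)))"
      unfolding set_R_Suc mem_Collect_eq mult_Suc by linarith
    moreover have "t < n" using t set_R_subset[of i] i j by auto
    ultimately show "qbit n ?b t = qbit n b t" by (simp add: qbit_overwrite)
  qed
  ultimately show "trans_weight w Q (q_in i ?b t) t (sub_index n (R (Suc i)) ?b) =
                   trans_weight w Q (q_in i b t) t (sub_index n (R (Suc i)) b)"
    by simp
qed

section \<open>Clean inputs and acceptance\<close>

definition clean :: "nat \<Rightarrow> bool" where
  "clean b \<longleftrightarrow> qbit n b 0 = 0 \<and> qbit n b 1 = 0"

lemma clean_overwrite: "0 \<notin> set qs \<Longrightarrow> 1 \<notin> set qs \<Longrightarrow> clean (overwrite n qs b s) = clean b"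
  using l_ge_3 unfolding clean_def n_def by (simp add: qbit_overwrite)

lemma sum_clean_1: "(\<Sum>b\<in>{b. b < 2 ^ n \<and> clean b}. (1::real)) = 2 ^ (n - 2)"
proof -
  have q: "set [0::nat, 1] \<subseteq> {..<n}" using l_ge_3 by (auto simp: n_def)
  have "clean b \<longleftrightarrow> sub_index n [0, 1] b = 0" for b
    unfolding clean_def sub_index_pair by auto
  then have "(\<Sum>b\<in>{b. b < 2 ^ n \<and> clean b}. (1::real)) =
      (\<Sum>b\<in>{b. b < 2 ^ n \<and> True}. (if sub_index n [0, 1] b = 0 then 1 else 0) * 1)"
    unfolding sum_Collect_less_if by simp
  also have "\<dots> = (\<Sum>s<(2::nat) ^ length [0::nat, 1]. if s = 0 then 1 else (0::real)) / 2 ^ length [0::nat, 1] *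
      (\<Sum>b\<in>{b. b < (2::nat) ^ n \<and> True}. 1)"
    by (rule sum_sub_index_factor[OF _ q]) auto
  also have "\<dots> = 2 ^ n / 4" by simp
  also have "\<dots> = 2 ^ (n - 2)"
    using l_ge_3 power_add[of "2::real" "n - 2" 2] by (simp add: n_def)
  finally show ?thesis .
qed

text \<open>Averaging over clean inputs: the first application of \<open>Q\<close> sees a maximally mixed input and
  yields records \<open>t\<close> with probability \<open>1/2\<close>; every later application sees \<open>Q = t\<close> and a fresh
  maximally mixed register \<open>R\<^sub>j\<close>, and contributes \<open>p_acc w Q 1\<close>.\<close>

lemma sum_clean_branch_prod:
  assumes j: "j < K" and t: "t \<le> 1"
  shows "(\<Sum>b\<in>{b. b < 2 ^ n \<and> clean b}. branch_prod (Suc j) b t) =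
         p_acc w Q 1 ^ j / 2 * (\<Sum>b\<in>{b. b < 2 ^ n \<and> clean b}. 1)"
  using j
proof (induction j)
  case 0
  let ?h = "2 ^ (w - 1) :: nat"
  let ?F = "\<lambda>x. trans_weight w Q (x div ?h) t (x mod ?h)"
  have "branch_prod (Suc 0) b t = ?F (sub_index n (QR (Suc 0)) b) * 1" for b
    using sub_index_less[of n "R (Suc 0)" b] by (simp add: branch_prod_def q_in_def sub_index_QR)
  moreover have "0 \<notin> set (QR (Suc 0))" "1 \<notin> set (QR (Suc 0))"
    using l_ge_3 by (auto simp: mem_QR_Suc)
  ultimately have "(\<Sum>b\<in>{b. b < 2 ^ n \<and> clean b}. branch_prod (Suc 0) b t) =
      (\<Sum>s<2 ^ length (QR (Suc 0)). ?F s) / 2 ^ length (QR (Suc 0)) * (\<Sum>b\<in>{b. b < 2 ^ n \<and> clean b}. 1)"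
    using K_pos clean_overwrite
    by (simp only:) (rule sum_sub_index_factor[OF distinct_QR set_QR_subset]; simp)
  also have "(\<Sum>s<2 ^ length (QR (Suc 0)). ?F s) / 2 ^ length (QR (Suc 0)) = (1 / 2 :: real)"
  proof -
    have "(2::real) ^ w = 2 * 2 ^ (w - 1)" using w_pos by (simp add: power_eq_if)
    then show ?thesis using sum_trans_weight_inputs[OF w_pos unitary_Q t] by simp
  qed
  finally show ?case by simp
next
  case (Suc j)
  then have j: "j < K" by simp
  have "branch_prod (Suc (Suc j)) b t = trans_weight w Q t t (sub_index n (R (Suc (Suc j))) b) * branch_prod (Suc j) b t" for b
    by (simp add: branch_prod_def q_in_def)
  moreover have "0 \<notin> set (R (Suc (Suc j)))" "1 \<notin> set (R (Suc (Suc j)))"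
    using l_ge_3 by (auto simp: set_R_Suc)
  ultimately have "(\<Sum>b\<in>{b. b < 2 ^ n \<and> clean b}. branch_prod (Suc (Suc j)) b t) =
      (\<Sum>s<2 ^ length (R (Suc (Suc j))). trans_weight w Q t t s) / 2 ^ length (R (Suc (Suc j))) *
      (\<Sum>b\<in>{b. b < 2 ^ n \<and> clean b}. branch_prod (Suc j) b t)"
    using clean_overwrite branch_prod_overwrite_R[OF Suc.prems]
    by (simp only:) (rule sum_sub_index_factor[OF distinct_R set_R_subset[OF Suc.prems]]; simp)
  also have "(\<Sum>s<2 ^ length (R (Suc (Suc j))). trans_weight w Q t t s) / 2 ^ length (R (Suc (Suc j))) = p_acc w Q 1"
    using sum_trans_weight_diag[OF w_pos unitary_Q t] by simp
  finally show ?case using Suc.IH[OF j] by simp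
qed

lemma counter_less_2N:
  assumes c: "c < K" and q0: "qbit l c 0 = 0" and q1: "qbit l c 1 = 0"
  shows "c < 2 * N"
proof -
  let ?y = "c div (2 * N)"
  have N: "0 < N" using N_eq by simp
  have p1: "(2::nat) ^ (l - 1 - 1) = 2 * N" and p0: "(2::nat) ^ (l - 1 - 0) = 2 * N * 2"
    using N_eq by (simp_all add: l_def)
  have "?y mod 2 = 0" using q1 unfolding qbit_def p1 .
  moreover have "?y div 2 mod 2 = 0" using q0 unfolding qbit_def p0 div_mult2_eq .
  moreover have "?y < 4" using c N by (simp add: K_def div_less_iff_less_mult)
  then have "?y \<in> {0, 1, 2, 3}" by auto
  ultimately have "?y = 0" by auto
  then show ?thesis using N by (simp add: div_eq_0_iff)
qed

text \<open>With records constant, the counter advances by \<open>N\<close> plus a multiple of \<open>K = 8N\<close>; starting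
  from a clean counter below \<open>2N\<close> it stays below \<open>4N\<close>, so \<open>C\<^sup>(\<^sup>1\<^sup>)\<close> reads 0.\<close>

lemma accepted_if_records:
  assumes b: "b < 2 ^ n" and clean: "clean b" and a: "a < 2 ^ n"
    and nz: "stage K $$ (a, b) \<noteq> 0" and rec: "records K b t a"
  shows "qbit n a 0 = 0"
proof -
  have l: "0 < l" "1 < l" using l_ge_3 by simp_all
  have "nflips K b a = (\<Sum>i<K. t)"
    unfolding nflips_def using rec by (intro sum.cong) (auto simp: records_def)
  then have "counter a = (counter b + N + K * t) mod K"
    using reachable_if_nonzero[of K a b] a b nz unfolding reachable_def by simp
  then have "counter a = (counter b + N) mod K" by simp
  moreover have "counter b < 2 * N"
    using counter_less_2N[OF counter_less[of b]] clean qbit_counter[OF l(1), of b] qbit_counter[OF l(2), of b]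
    unfolding clean_def by simp
  ultimately have "counter a < 4 * N" by (simp add: K_def)
  moreover have "(2::nat) ^ (l - 1 - 0) = 4 * N" using N_eq by (simp add: l_def)
  ultimately have "qbit l (counter a) 0 = 0" by (simp add: qbit_def)
  then show ?thesis using qbit_counter[OF l(1), of a] by simp
qed

lemma p_acc_stage_eq_sum:
  "p_acc n (stage K) 2 = (\<Sum>b<2 ^ n. if clean b then
     (\<Sum>a<2 ^ n. if qbit n a 0 = 0 then (cmod (stage K $$ (a, b)))\<^sup>2 else 0) / 2 ^ (n - 2) else 0)"
proof -
  have "p_acc n (stage K) 2 = (\<Sum>b<2 ^ n. \<Sum>a<2 ^ n.
     (if qbit n a 0 = 0 \<and> (\<forall>t<2. qbit n b t = 0) then 1 / 2 ^ (n - 2) else 0) * (cmod (stage K $$ (a, b)))\<^sup>2)"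
    unfolding p_acc_eq_sum[OF stage_carrier_mat] by (rule sum.swap)
  also have "\<dots> = (\<Sum>b<2 ^ n. if clean b then
     (\<Sum>a<2 ^ n. if qbit n a 0 = 0 then (cmod (stage K $$ (a, b)))\<^sup>2 else 0) / 2 ^ (n - 2) else 0)"
  proof (intro sum.cong refl)
    fix b
    have "(\<forall>t<2. qbit n b t = 0) \<longleftrightarrow> clean b"
      unfolding clean_def by (auto simp: less_2_cases_iff)
    then show "(\<Sum>a<2 ^ n. (if qbit n a 0 = 0 \<and> (\<forall>t<2. qbit n b t = 0) then 1 / 2 ^ (n - 2) else 0) *
        (cmod (stage K $$ (a, b)))\<^sup>2) = (if clean b then
        (\<Sum>a<2 ^ n. if qbit n a 0 = 0 then (cmod (stage K $$ (a, b)))\<^sup>2 else 0) / 2 ^ (n - 2) else 0)"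
      by (auto simp: sum_divide_distrib intro!: sum.cong)
  qed
  finally show ?thesis .
qed

lemma branch_prods_le_accepted:
  assumes b: "b < 2 ^ n" and clean: "clean b"
  shows "branch_prod K b 0 + branch_prod K b 1 \<le>
         (\<Sum>a<2 ^ n. if qbit n a 0 = 0 then (cmod (stage K $$ (a, b)))\<^sup>2 else 0)"
proof -
  let ?f = "\<lambda>a. (cmod (stage K $$ (a, b)))\<^sup>2"
  have "branch_prod K b 0 + branch_prod K b 1 = branch_weight K b 0 + branch_weight K b 1"
    using branch_weight_eq_prod[of K _ b] b by simp
  also have "\<dots> = (\<Sum>a<2 ^ n. (if records K b 0 a then ?f a else 0) + (if records K b 1 a then ?f a else 0))"
    unfolding branch_weight_def by (simp add: sum.distrib)
  also have "\<dots> \<le> (\<Sum>a<2 ^ n. if qbit n a 0 = 0 then ?f a else 0)"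
  proof (rule sum_mono)
    fix a assume a: "a \<in> {..<(2::nat) ^ n}"
    have "\<not> (records K b 0 a \<and> records K b 1 a)"
      using K_pos unfolding records_def by auto
    moreover have "qbit n a 0 = 0" if "stage K $$ (a, b) \<noteq> 0" "records K b t a" for t
      using accepted_if_records[OF b clean _ that] a by simp
    ultimately show "(if records K b 0 a then ?f a else 0) + (if records K b 1 a then ?f a else 0) \<le>
                     (if qbit n a 0 = 0 then ?f a else 0)"
      by (cases "stage K $$ (a, b) = 0") auto
  qed
  finally show ?thesis .
qed

lemma p_acc_stage_ge: "p_acc w Q 1 ^ (K - 1) \<le> p_acc n (stage K) 2"
proof -
  let ?B = "{b. b < 2 ^ n \<and> clean b}"
  have K: "K = Suc (K - 1)" "K - 1 < K" using K_pos by simp_all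
  have s: "(\<Sum>b\<in>?B. branch_prod K b t) = p_acc w Q 1 ^ (K - 1) / 2 * 2 ^ (n - 2)" if "t \<le> 1" for t
    using sum_clean_branch_prod[OF K(2) that] sum_clean_1 K(1) by simp
  have "p_acc w Q 1 ^ (K - 1) = ((\<Sum>b\<in>?B. branch_prod K b 0) + (\<Sum>b\<in>?B. branch_prod K b 1)) / 2 ^ (n - 2)"
    unfolding s[OF le0] s[OF order_refl] by simp
  also have "\<dots> = (\<Sum>b<2 ^ n. if clean b then (branch_prod K b 0 + branch_prod K b 1) / 2 ^ (n - 2) else 0)"
    unfolding sum_Collect_less_if[symmetric] by (simp only: sum.distrib[symmetric] sum_divide_distrib)
  also have "\<dots> \<le> (\<Sum>b<2 ^ n. if clean b then
     (\<Sum>a<2 ^ n. if qbit n a 0 = 0 then (cmod (stage K $$ (a, b)))\<^sup>2 else 0) / 2 ^ (n - 2) else 0)"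
    using branch_prods_le_accepted by (intro sum_mono) (auto intro: divide_right_mono)
  also have "\<dots> = p_acc n (stage K) 2"
    by (rule p_acc_stage_eq_sum[symmetric])
  finally show ?thesis .
qed

end

theorem proposition15:
  fixes Q :: "complex mat" and w N :: nat
  assumes "1 \<le> w"
    and "unitary_mat (2 ^ w) Q"
    and "\<exists>m. N = 2 ^ m"
  shows "p_acc (R2_n N w) (R2 N w Q) 2 \<ge> (p_acc w Q 1) ^ (8 * N - 1)"
proof -
  obtain m where m: "N = 2 ^ m" using assms(3) by blast
  interpret R2_circuit N w m Q using assms(1,2) m by unfold_locales
  have "R2_n N w = n" unfolding R2_n_def R2_l_def n_def l_def K_def using m by simp
  then show ?thesis using p_acc_stage_ge unfolding R2_eq_stage K_def by simp
qed

end
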